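(* Consider the Johnson scheme $\mathrm J(N,D)$ with $D\le\lfloor N/2\rfloor$ and $D\ge 1$, fix $x\in X$, let $Y\subseteq X$ with $1<|Y|<|X|$, $\chi=\chi_Y$, $\delta_x=\delta_x(\chi)$, $\delta^*=\delta^*(\chi)$. Suppose $t\in\{1,\dots,D\}$ is such that for every $1\le r\le t$ at least one of $$|\{r\le j\le D-r:E_j\chi\ne0\}|\le\delta_x-r,\qquad |\{r\le i\le D-r:E_i^*(x)\chi\ne0\}|\le\delta^*-r$$ holds. Then for every $0\le k\le D$, the multiset $\{x\cap y: y\in Y,\ |x\cap y|=D-k\}$ (counted with repetition), viewed as a family of $(D-k)$-subsets of the $D$-set $x$, forms a $t$-design (i.e. every $t$-subset of $x$ is contained in the same number of its members).
   Context: The Johnson scheme $\mathrm J(N,D)$ has vertex set $X$ the $D$-subsets of $\{1,\dots,N\}$ and relations $R_i=\{(u,v):|u\cap v|=D-i\}$, with associate matrices $A_i$ and primitive idempotents $E_0=|X|^{-1}J,E_1,\dots,E_D$ in the standard cometric (Q-polynomial) ordering. $V=\mathbb C^X$, $\chi_Y=\sum_{y\in Y}\hat y$. $E_i^*(x)$ is the diagonal matrix with $(E_i^*(x))_{yy}=1$ if $(x,y)\in R_i$ and $0$ otherwise. $\delta_x(\chi)=\min\{i\ne0:E_i^*(x)\chi\ne0\}$, $\delta^*(\chi)=\min\{j\ne0:E_j\chi\ne0\}$. *)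

theory Defs
  imports Complex_Main "HOL-Library.Multiset"
begin

text \<open>Johnson scheme J(N,D): vertices are the D-subsets of {1..N}.
  Vectors in V = C^X are represented as functions on nat sets (only the
  values on X matter; all operators below return 0 outside X).\<close>

definition johnson_X :: "nat \<Rightarrow> nat \<Rightarrow> nat set set" where
  "johnson_X N D = {u. u \<subseteq> {1..N} \<and> card u = D}"

definition char_vec :: "nat set set \<Rightarrow> nat set \<Rightarrow> complex" where
  "char_vec Y = (\<lambda>u. if u \<in> Y then 1 else 0)"

definition johnson_A1 :: "nat \<Rightarrow> nat \<Rightarrow> (nat set \<Rightarrow> complex) \<Rightarrow> nat set \<Rightarrow> complex" where
  "johnson_A1 N D v = (\<lambda>u. if u \<in> johnson_X N D
      then (\<Sum>w\<in>johnson_X N D. if card (u \<inter> w) = D - 1 then v w else 0) else 0)"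

text \<open>Eigenvalue of A_1 on the j-th eigenspace in the standard (Q-polynomial) ordering.\<close>
definition johnson_theta :: "nat \<Rightarrow> nat \<Rightarrow> nat \<Rightarrow> real" where
  "johnson_theta N D j = (real D - real j) * (real N - real D - real j) - real j"

fun johnson_Eprod :: "nat \<Rightarrow> nat \<Rightarrow> nat \<Rightarrow> nat list \<Rightarrow> (nat set \<Rightarrow> complex) \<Rightarrow> nat set \<Rightarrow> complex" where
  "johnson_Eprod N D j [] v = (\<lambda>u. if u \<in> johnson_X N D then v u else 0)"
| "johnson_Eprod N D j (l # ls) v =
     (if l = j then johnson_Eprod N D j ls v
      else (let w = johnson_Eprod N D j ls v in
             (\<lambda>u. (johnson_A1 N D w u - of_real (johnson_theta N D l) * w u)
                   / of_real (johnson_theta N D j - johnson_theta N D l))))"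

text \<open>Primitive idempotent E_j (j = 0..D): the spectral projection of A_1 onto
  its theta_j-eigenspace (A_1 generates the Bose-Mesner algebra).\<close>
definition johnson_E :: "nat \<Rightarrow> nat \<Rightarrow> nat \<Rightarrow> (nat set \<Rightarrow> complex) \<Rightarrow> nat set \<Rightarrow> complex" where
  "johnson_E N D j v = johnson_Eprod N D j [0..<Suc D] v"

definition johnson_Estar :: "nat \<Rightarrow> nat \<Rightarrow> nat set \<Rightarrow> nat \<Rightarrow> (nat set \<Rightarrow> complex) \<Rightarrow> nat set \<Rightarrow> complex" where
  "johnson_Estar N D x i v = (\<lambda>u. if u \<in> johnson_X N D \<and> card (x \<inter> u) = D - i then v u else 0)"

definition delta_x :: "nat \<Rightarrow> nat \<Rightarrow> nat set \<Rightarrow> (nat set \<Rightarrow> complex) \<Rightarrow> nat" where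
  "delta_x N D x chi = (LEAST i. i \<noteq> 0 \<and> i \<le> D \<and> johnson_Estar N D x i chi \<noteq> (\<lambda>_. 0))"

definition delta_star :: "nat \<Rightarrow> nat \<Rightarrow> (nat set \<Rightarrow> complex) \<Rightarrow> nat" where
  "delta_star N D chi = (LEAST j. j \<noteq> 0 \<and> j \<le> D \<and> johnson_E N D j chi \<noteq> (\<lambda>_. 0))"

definition is_t_design :: "nat \<Rightarrow> nat set \<Rightarrow> nat set multiset \<Rightarrow> bool" where
  "is_t_design t P B = (\<exists>lam. \<forall>T. T \<subseteq> P \<and> card T = t \<longrightarrow>
        size (filter_mset (\<lambda>b. T \<subseteq> b) B) = lam)"

end

theory Submission
  imports Defs
begin

text \<open>Fix \<open>x\<close> and a harmonic function \<open>h\<close> of degree \<open>r\<close> on the subsets of \<open>x\<close>, i.e. one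
  supported on \<open>r\<close>-sets whose sums over the \<open>r\<close>-sets through any \<open>(r-1)\<close>-set vanish, and
  put \<open>H S = \<Sum>T\<subseteq>S. h T\<close>. The vectors \<open>y \<mapsto> c |x \<inter> y| * H (x \<inter> y)\<close> span an
  \<open>A\<close>-invariant space inside \<open>E\<^sub>r V + \<dots> + E\<^bsub>D-r\<^esub> V\<close> on which \<open>A\<close> acts by a three-term
  recurrence in \<open>|x \<inter> y|\<close>. Let \<open>v\<close> be the orthogonal projection of \<open>\<chi>\<close> onto this span; then
  \<open>E\<^sub>j \<chi> = 0\<close> forces \<open>E\<^sub>j v = 0\<close>. Under the first inequality, \<open>\<Prod>(A - \<theta>\<^sub>j)\<close> over the
  spectrum of \<open>v\<close> kills \<open>v\<close>, although every factor raises the top level of the coefficients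
  of \<open>v\<close> by one and \<open>\<delta>\<^sub>x\<close> keeps the final level at most \<open>D - r\<close>, where \<open>H\<close> is not
  identically zero. Under the second, a Lagrange polynomial in \<open>|x \<inter> y|\<close> of low degree isolates one
  coefficient of \<open>v\<close> but lies in \<open>E\<^sub>0 V + \<dots> + E\<^bsub>\<delta>\<^sup>*-1\<^esub> V\<close>, which is orthogonal to \<open>v\<close>.
  So \<open>v = 0\<close>, i.e. \<open>\<Sum> H (x \<inter> y) = 0\<close> over the \<open>y \<in> Y\<close> with \<open>|x \<inter> y| = m\<close>, for all
  harmonic \<open>h\<close> of degree \<open>1 \<le> r \<le> t\<close>. By induction on \<open>s\<close> these relations make the
  deviation of the block counts of \<open>(s+1)\<close>-sets from their mean harmonic and then zero,
  which is the design property.\<close>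

definition is_linear_op :: "(('a \<Rightarrow> complex) \<Rightarrow> 'b \<Rightarrow> complex) \<Rightarrow> bool" where
  "is_linear_op F \<longleftrightarrow> (\<forall>u v. F (\<lambda>y. u y + v y) = (\<lambda>z. F u z + F v z))
                      \<and> (\<forall>c u. F (\<lambda>y. c * u y) = (\<lambda>z. c * F u z))"

lemma linear_opI:
  assumes "\<And>u v. F (\<lambda>y. u y + v y) = (\<lambda>z. F u z + F v z)"
    and "\<And>c u. F (\<lambda>y. c * u y) = (\<lambda>z. c * F u z)"
  shows "is_linear_op F"
  using assms by (simp add: is_linear_op_def)

context
  fixes F :: "('a \<Rightarrow> complex) \<Rightarrow> 'b \<Rightarrow> complex"
  assumes F: "is_linear_op F"
begin

lemma linear_op_add: "F (\<lambda>y. u y + v y) = (\<lambda>z. F u z + F v z)"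
  using F by (simp add: is_linear_op_def)

lemma linear_op_scale: "F (\<lambda>y. c * u y) = (\<lambda>z. c * F u z)"
  using F by (simp add: is_linear_op_def)

lemma linear_op_zero: "F (\<lambda>y. 0) = (\<lambda>z. 0)"
  using linear_op_scale[of 0 "\<lambda>y. 0"] by simp

lemma linear_op_diff: "F (\<lambda>y. u y - v y) = (\<lambda>z. F u z - F v z)"
  using linear_op_add[of u "\<lambda>y. (-1) * v y"] linear_op_scale[of "-1" v] by simp

lemma linear_op_sum: "F (\<lambda>y. \<Sum>i\<in>I. f i y) = (\<lambda>z. \<Sum>i\<in>I. F (f i) z)"
proof (induction I rule: infinite_finite_induct)
  case (insert i I)
  then show ?case using linear_op_add[of "f i" "\<lambda>y. \<Sum>i\<in>I. f i y"] by simp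
qed (simp_all add: linear_op_zero)

end

lemma linear_op_comp: "is_linear_op F \<Longrightarrow> is_linear_op G \<Longrightarrow> is_linear_op (\<lambda>u. F (G u))"
  by (simp add: is_linear_op_def)

lemma linear_op_shift:
  "is_linear_op F \<Longrightarrow> is_linear_op (\<lambda>u z. F u z - c * u z)"
  by (rule linear_opI) (simp_all add: linear_op_add linear_op_scale fun_eq_iff algebra_simps)

lemma linear_op_cmult: "is_linear_op F \<Longrightarrow> is_linear_op (\<lambda>u z. c * F u z)"
  by (rule linear_opI) (simp_all add: linear_op_add linear_op_scale fun_eq_iff algebra_simps)

lemma sum_if_const:
  "finite A \<Longrightarrow> (\<Sum>a\<in>A. if P a then c else 0) = of_nat (card {a\<in>A. P a}) * c"
  by (simp add: sum.inter_filter[symmetric])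

lemma remove1_eq_filter: "distinct xs \<Longrightarrow> remove1 a xs = filter (\<lambda>l. l \<noteq> a) xs"
  by (induction xs) (auto intro!: filter_True[symmetric])

section \<open>Spectral decomposition of the Johnson graph\<close>

locale johnson_scheme =
  fixes N D :: nat
  assumes D_pos: "1 \<le> D" and N_ge: "2 * D \<le> N"
begin

abbreviation "X \<equiv> johnson_X N D"
abbreviation "A \<equiv> johnson_A1 N D"
abbreviation "E \<equiv> johnson_E N D"

lemma mem_X_iff: "y \<in> X \<longleftrightarrow> y \<subseteq> {1..N} \<and> card y = D"
  by (simp add: johnson_X_def)

lemma finite_X: "finite X"
  by (rule finite_subset[of _ "Pow {1..N}"]) (auto simp: johnson_X_def)

lemma finite_vertex: "y \<in> X \<Longrightarrow> finite y"
  using mem_X_iff finite_subset by blast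

lemma swap_bij:
  assumes y: "y \<in> X"
  shows "bij_betw (\<lambda>(a, b). insert b (y - {a})) (y \<times> ({1..N} - y))
           {w \<in> X. card (y \<inter> w) = D - 1}"
proof (rule bij_betwI')
  have fy: "finite y" and yN: "y \<subseteq> {1..N}" and cy: "card y = D"
    using y mem_X_iff finite_vertex by auto
  fix p assume "p \<in> y \<times> ({1..N} - y)"
  then obtain a b where p: "p = (a, b)" "a \<in> y" "b \<in> {1..N}" "b \<notin> y" by auto
  have "card (y - {a}) = D - 1" using p fy cy by simp
  then have "card (insert b (y - {a})) = D" using p fy D_pos by simp
  moreover have "y \<inter> insert b (y - {a}) = y - {a}" using p by auto
  moreover have "insert b (y - {a}) \<subseteq> {1..N}" using p yN by auto
  ultimately show "(case p of (a, b) \<Rightarrow> insert b (y - {a})) \<in> {w \<in> X. card (y \<inter> w) = D - 1}"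
    using p \<open>card (y - {a}) = D - 1\<close> by (simp add: mem_X_iff)
next
  fix p q assume "p \<in> y \<times> ({1..N} - y)" "q \<in> y \<times> ({1..N} - y)"
  then show "((case p of (a, b) \<Rightarrow> insert b (y - {a})) = (case q of (a, b) \<Rightarrow> insert b (y - {a})))
      = (p = q)"
    by (cases p, cases q) (auto simp: insert_eq_iff insert_Diff_if split: if_splits)
next
  fix w assume w: "w \<in> {w \<in> X. card (y \<inter> w) = D - 1}"
  have fy: "finite y" "card y = D" using y mem_X_iff finite_vertex by auto
  have fw: "finite w" "w \<subseteq> {1..N}" "card w = D" and ci: "card (y \<inter> w) = D - 1"
    using w mem_X_iff finite_vertex by auto
  have "card (y - w) = 1" using fy ci D_pos by (simp add: card_Diff_subset_Int)
  then obtain a where ya: "y - w = {a}" using card_1_singletonE by blast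
  have "card (w - y) = 1" using fw ci D_pos by (simp add: card_Diff_subset_Int Int_commute)
  then obtain b where wb: "w - y = {b}" using card_1_singletonE by blast
  have "w = insert b (y - {a})" "a \<in> y" "b \<in> {1..N} - y" using ya wb fw by blast+
  then show "\<exists>p\<in>y \<times> ({1..N} - y). w = (case p of (a, b) \<Rightarrow> insert b (y - {a}))"
    by (intro bexI[of _ "(a, b)"]) auto
qed

lemma swap_mem_X: "y \<in> X \<Longrightarrow> a \<in> y \<Longrightarrow> b \<in> {1..N} - y \<Longrightarrow> insert b (y - {a}) \<in> X"
  using bij_betwE[OF swap_bij] by fastforce

lemma A_eq_swap_sum:
  assumes y: "y \<in> X"
  shows "A v y = (\<Sum>a\<in>y. \<Sum>b\<in>{1..N} - y. v (insert b (y - {a})))"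
proof -
  have "A v y = (\<Sum>w\<in>{w \<in> X. card (y \<inter> w) = D - 1}. v w)"
    using y finite_X by (simp add: johnson_A1_def sum.inter_filter)
  also have "\<dots> = (\<Sum>p\<in>y \<times> ({1..N} - y). v (case p of (a, b) \<Rightarrow> insert b (y - {a})))"
    using sum.reindex_bij_betw[OF swap_bij[OF y], of v] by simp
  finally show ?thesis by (simp add: sum.cartesian_product case_prod_unfold)
qed

definition vanishes_off_X :: "(nat set \<Rightarrow> complex) \<Rightarrow> bool" where
  "vanishes_off_X u \<longleftrightarrow> (\<forall>y. y \<notin> X \<longrightarrow> u y = 0)"

definition restrict_X :: "(nat set \<Rightarrow> complex) \<Rightarrow> nat set \<Rightarrow> complex" where
  "restrict_X u = (\<lambda>y. if y \<in> X then u y else 0)"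

definition iprod :: "(nat set \<Rightarrow> complex) \<Rightarrow> (nat set \<Rightarrow> complex) \<Rightarrow> complex" where
  "iprod u v = (\<Sum>y\<in>X. u y * cnj (v y))"

definition eig :: "nat \<Rightarrow> complex" where
  "eig j = of_real (johnson_theta N D j)"

definition A_shift :: "nat \<Rightarrow> (nat set \<Rightarrow> complex) \<Rightarrow> nat set \<Rightarrow> complex" where
  "A_shift l u = (\<lambda>y. A u y - eig l * u y)"

fun A_shift_prod :: "nat list \<Rightarrow> (nat set \<Rightarrow> complex) \<Rightarrow> nat set \<Rightarrow> complex" where
  "A_shift_prod [] u = restrict_X u"
| "A_shift_prod (l # L) u = A_shift l (A_shift_prod L u)"

lemma cnj_eig [simp]: "cnj (eig j) = eig j"
  by (simp add: eig_def)

lemma A_outside: "y \<notin> X \<Longrightarrow> A u y = 0"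
  by (simp add: johnson_A1_def)

lemma restrict_X_id [simp]: "vanishes_off_X u \<Longrightarrow> restrict_X u = u"
  by (auto simp: vanishes_off_X_def restrict_X_def)

lemma restrict_X_vanishes [simp]: "vanishes_off_X (restrict_X u)"
  by (simp add: vanishes_off_X_def restrict_X_def)

lemma A_restrict_X [simp]: "A (restrict_X u) = A u"
  by (auto simp add: johnson_A1_def restrict_X_def fun_eq_iff intro!: sum.cong)

lemma linear_A: "is_linear_op A"
  by (rule linear_opI)
     (auto simp: johnson_A1_def fun_eq_iff sum.distrib[symmetric] sum_distrib_left intro!: sum.cong)

lemma linear_restrict_X: "is_linear_op restrict_X"
  by (rule linear_opI) (simp_all add: restrict_X_def fun_eq_iff)

lemma linear_A_shift: "is_linear_op (A_shift l)"
  unfolding A_shift_def by (rule linear_op_shift[OF linear_A])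

lemma linear_A_shift_prod: "is_linear_op (A_shift_prod L)"
proof (induction L)
  case Nil
  show ?case by (simp add: linear_restrict_X)
next
  case (Cons l L)
  then show ?case
    using linear_op_comp[OF linear_A_shift Cons.IH] by simp
qed

lemma A_shift_vanishes [simp]: "vanishes_off_X u \<Longrightarrow> vanishes_off_X (A_shift l u)"
  by (simp add: vanishes_off_X_def A_shift_def A_outside)

lemma A_shift_prod_vanishes [simp]: "vanishes_off_X (A_shift_prod L u)"
  by (induction L) auto

lemma A_shift_prod_restrict_X [simp]: "A_shift_prod L (restrict_X u) = A_shift_prod L u"
  by (induction L) simp_all

lemma A_shift_commute: "A_shift l (A_shift m u) = A_shift m (A_shift l u)"
  unfolding A_shift_def linear_op_diff[OF linear_A] linear_op_scale[OF linear_A]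
  by (simp add: fun_eq_iff algebra_simps)

lemma A_shift_prod_A_shift: "A_shift_prod L (A_shift l u) = A_shift l (A_shift_prod L u)"
proof (induction L)
  case Nil
  have "restrict_X (A_shift l u) = A_shift l (restrict_X u)"
    using A_restrict_X[of u] by (auto simp: restrict_X_def A_shift_def fun_eq_iff A_outside)
  then show ?case by simp
next
  case (Cons m L)
  then show ?case by (simp add: A_shift_commute)
qed

lemma A_shift_prod_append: "A_shift_prod (L1 @ L2) u = A_shift_prod L1 (A_shift_prod L2 u)"
  by (induction L1) simp_all

lemma A_shift_prod_commute: "A_shift_prod L1 (A_shift_prod L2 u) = A_shift_prod L2 (A_shift_prod L1 u)"
  by (induction L1) (simp_all add: A_shift_prod_A_shift)

lemma A_shift_prod_remove1:
  "l \<in> set L \<Longrightarrow> A_shift_prod L u = A_shift_prod (remove1 l L) (A_shift l u)"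
  by (induction L) (auto simp: A_shift_prod_A_shift A_shift_commute)

lemma iprod_diff_left: "iprod (\<lambda>y. v y - w y) u = iprod v u - iprod w u"
  by (simp add: iprod_def sum_subtractf algebra_simps)

lemma iprod_diff_right: "iprod u (\<lambda>y. v y - w y) = iprod u v - iprod u w"
  by (simp add: iprod_def sum_subtractf algebra_simps)

lemma iprod_scale_left: "iprod (\<lambda>y. c * v y) u = c * iprod v u"
  by (simp add: iprod_def sum_distrib_left algebra_simps)

lemma iprod_scale_right: "iprod u (\<lambda>y. c * v y) = cnj c * iprod u v"
  by (simp add: iprod_def sum_distrib_left algebra_simps)

lemma iprod_zero_left [simp]: "iprod (\<lambda>y. 0) u = 0"
  by (simp add: iprod_def)

lemma iprod_zero_right [simp]: "iprod u (\<lambda>y. 0) = 0"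
  by (simp add: iprod_def)

lemma iprod_sum_right: "iprod v (\<lambda>y. \<Sum>k\<in>I. g k y) = (\<Sum>k\<in>I. iprod v (g k))"
  unfolding iprod_def by (simp add: sum_distrib_left cnj_sum) (rule sum.swap)

lemma iprod_restrict_X_left [simp]: "iprod (restrict_X u) v = iprod u v"
  by (simp add: iprod_def restrict_X_def)

lemma iprod_restrict_X_right [simp]: "iprod u (restrict_X v) = iprod u v"
  by (simp add: iprod_def restrict_X_def)

lemma A_self_adjoint: "iprod (A u) v = iprod u (A v)"
proof -
  have "iprod (A u) v = (\<Sum>y\<in>X. \<Sum>w\<in>X. (if card (y \<inter> w) = D - 1 then u w else 0) * cnj (v y))"
    by (simp add: iprod_def johnson_A1_def sum_distrib_right)
  also have "\<dots> = (\<Sum>w\<in>X. \<Sum>y\<in>X. (if card (y \<inter> w) = D - 1 then u w else 0) * cnj (v y))"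
    by (rule sum.swap)
  also have "\<dots> = iprod u (A v)"
    by (auto simp add: iprod_def johnson_A1_def sum_distrib_left Int_commute intro!: sum.cong)
  finally show ?thesis .
qed

lemma A_shift_self_adjoint: "iprod (A_shift l u) v = iprod u (A_shift l v)"
  by (simp add: A_shift_def iprod_diff_left iprod_diff_right iprod_scale_left iprod_scale_right
      A_self_adjoint)

lemma A_shift_prod_self_adjoint: "iprod (A_shift_prod L u) v = iprod u (A_shift_prod L v)"
proof (induction L arbitrary: v)
  case (Cons l L)
  have "iprod (A_shift_prod (l # L) u) v = iprod u (A_shift_prod L (A_shift l v))"
    by (simp add: A_shift_self_adjoint Cons.IH)
  then show ?case by (simp add: A_shift_prod_A_shift)
qed simp

lemma iprod_self_eq_zero:
  assumes "vanishes_off_X w" "iprod w w = 0"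
  shows "w = (\<lambda>y. 0)"
proof -
  have "iprod w w = (\<Sum>y\<in>X. complex_of_real ((cmod (w y))\<^sup>2))"
    unfolding iprod_def by (rule sum.cong) (simp_all only: complex_norm_square)
  then have "complex_of_real (\<Sum>y\<in>X. (cmod (w y))\<^sup>2) = 0"
    using assms(2) by (simp only: of_real_sum)
  then have "(\<Sum>y\<in>X. (cmod (w y))\<^sup>2) = 0" by (simp only: of_real_eq_0_iff)
  then have "\<forall>y\<in>X. w y = 0" using finite_X by (simp add: sum_nonneg_eq_0_iff)
  then show ?thesis using assms(1) by (auto simp: vanishes_off_X_def fun_eq_iff)
qed

fun lagrange_coeff :: "nat \<Rightarrow> nat list \<Rightarrow> complex" where
  "lagrange_coeff j [] = 1"
| "lagrange_coeff j (l # L) =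
     (if l = j then lagrange_coeff j L else lagrange_coeff j L / (eig j - eig l))"

lemma Eprod_eq_A_shift_prod:
  "johnson_Eprod N D j L u = (\<lambda>y. lagrange_coeff j L * A_shift_prod (filter (\<lambda>l. l \<noteq> j) L) u y)"
proof (induction L)
  case (Cons l L)
  show ?case
    by (cases "l = j")
       (simp_all add: Cons.IH Let_def eig_def[symmetric] linear_op_scale[OF linear_A] A_shift_def
         fun_eq_iff field_simps)
qed (simp add: restrict_X_def fun_eq_iff)

abbreviation "E_factors j \<equiv> filter (\<lambda>l. l \<noteq> j) [0..<Suc D]"

lemma E_eq_A_shift_prod:
  "E j u = (\<lambda>y. lagrange_coeff j [0..<Suc D] * A_shift_prod (E_factors j) u y)"
  by (simp add: johnson_E_def Eprod_eq_A_shift_prod)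

lemma linear_E: "is_linear_op (E j)"
  unfolding E_eq_A_shift_prod by (rule linear_op_cmult[OF linear_A_shift_prod])

lemma cnj_lagrange_coeff [simp]: "cnj (lagrange_coeff j L) = lagrange_coeff j L"
  by (induction L) auto

lemma E_self_adjoint: "iprod (E j u) v = iprod u (E j v)"
  by (simp add: E_eq_A_shift_prod iprod_scale_left iprod_scale_right A_shift_prod_self_adjoint)

lemma E_vanishes [simp]: "vanishes_off_X (E j u)"
  using A_shift_prod_vanishes by (simp add: E_eq_A_shift_prod vanishes_off_X_def)

lemma E_A_shift_prod: "E l (A_shift_prod L u) = A_shift_prod L (E l u)"
  by (simp add: E_eq_A_shift_prod linear_op_scale[OF linear_A_shift_prod] A_shift_prod_commute)

lemma johnson_theta_strict_decreasing:
  assumes "j < l" "l \<le> D"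
  shows "johnson_theta N D l < johnson_theta N D j"
proof -
  have "(real D - real l) * (real N - real D - real l) \<le> (real D - real j) * (real N - real D - real j)"
    using assms N_ge by (intro mult_mono) auto
  then show ?thesis using assms unfolding johnson_theta_def by simp
qed

lemma eig_inj: "j \<le> D \<Longrightarrow> l \<le> D \<Longrightarrow> eig j = eig l \<Longrightarrow> j = l"
  using johnson_theta_strict_decreasing[of j l] johnson_theta_strict_decreasing[of l j]
  unfolding eig_def by (metis linorder_neqE_nat of_real_eq_iff order_less_irrefl)

text \<open>\<open>span_below (Suc j)\<close> is \<open>E\<^sub>0 V + \<dots> + E\<^sub>j V\<close>.\<close>

definition superset_vec :: "nat set \<Rightarrow> nat set \<Rightarrow> complex" where
  "superset_vec S = (\<lambda>y. if y \<in> X \<and> S \<subseteq> y then 1 else 0)"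

definition small_sets :: "nat \<Rightarrow> nat set set" where
  "small_sets i = {S. S \<subseteq> {1..N} \<and> card S < i}"

definition span_below :: "nat \<Rightarrow> (nat set \<Rightarrow> complex) set" where
  "span_below i = {u. \<exists>f. u = (\<lambda>y. \<Sum>S\<in>small_sets i. f S * superset_vec S y)}"

lemma finite_small_sets: "finite (small_sets i)"
  by (rule finite_subset[of _ "Pow {1..N}"]) (auto simp: small_sets_def)

lemma span_below_zero: "(\<lambda>y. 0) \<in> span_below i"
  unfolding span_below_def by (rule CollectI, rule exI[of _ "\<lambda>S. 0"]) simp

lemma span_below_add:
  assumes "u \<in> span_below i" "v \<in> span_below i"
  shows "(\<lambda>y. u y + v y) \<in> span_below i"
proof -
  obtain f g where "u = (\<lambda>y. \<Sum>S\<in>small_sets i. f S * superset_vec S y)"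
    "v = (\<lambda>y. \<Sum>S\<in>small_sets i. g S * superset_vec S y)"
    using assms by (auto simp: span_below_def)
  then show ?thesis unfolding span_below_def
    by (intro CollectI exI[of _ "\<lambda>S. f S + g S"]) (simp add: sum.distrib algebra_simps)
qed

lemma span_below_scale:
  assumes "u \<in> span_below i"
  shows "(\<lambda>y. c * u y) \<in> span_below i"
proof -
  obtain f where "u = (\<lambda>y. \<Sum>S\<in>small_sets i. f S * superset_vec S y)"
    using assms by (auto simp: span_below_def)
  then show ?thesis unfolding span_below_def
    by (intro CollectI exI[of _ "\<lambda>S. c * f S"]) (simp add: sum_distrib_left algebra_simps)
qed

lemma span_below_diff:
  "u \<in> span_below i \<Longrightarrow> v \<in> span_below i \<Longrightarrow> (\<lambda>y. u y - v y) \<in> span_below i"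
  using span_below_add[of u i "\<lambda>y. (-1) * v y"] span_below_scale[of v i "-1"] by simp

lemma span_below_sum:
  "(\<And>k. k \<in> I \<Longrightarrow> g k \<in> span_below i) \<Longrightarrow> (\<lambda>y. \<Sum>k\<in>I. g k y) \<in> span_below i"
proof (induction I rule: infinite_finite_induct)
  case (insert k I)
  then show ?case using span_below_add[of "g k" i "\<lambda>y. \<Sum>k\<in>I. g k y"] by simp
qed (simp_all add: span_below_zero)

lemma superset_vec_in_span_below:
  assumes "S \<subseteq> {1..N}" "card S < i"
  shows "superset_vec S \<in> span_below i"
proof -
  have "S \<in> small_sets i" using assms by (simp add: small_sets_def)
  then have "superset_vec S = (\<lambda>y. \<Sum>T\<in>small_sets i. (if T = S then 1 else 0) * superset_vec T y)"
    using finite_small_sets by (simp add: if_distrib[of "\<lambda>t. t * _"] cong: if_cong)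
  then show ?thesis unfolding span_below_def mem_Collect_eq
    by (rule exI[of _ "\<lambda>T. if T = S then 1 else 0"])
qed

lemma span_below_mono:
  assumes "u \<in> span_below i" "i \<le> j"
  shows "u \<in> span_below j"
proof -
  obtain f where u: "u = (\<lambda>y. \<Sum>S\<in>small_sets i. f S * superset_vec S y)"
    using assms by (auto simp: span_below_def)
  show ?thesis unfolding u
    by (intro span_below_sum span_below_scale superset_vec_in_span_below)
       (use assms in \<open>auto simp: small_sets_def\<close>)
qed

lemma span_below_vanishes: "u \<in> span_below i \<Longrightarrow> vanishes_off_X u"
  by (auto simp: span_below_def vanishes_off_X_def superset_vec_def)

lemma span_below_0: "u \<in> span_below 0 \<Longrightarrow> u = (\<lambda>y. 0)"
  by (auto simp: span_below_def small_sets_def)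

lemma span_below_Suc_D:
  assumes u: "vanishes_off_X u"
  shows "u \<in> span_below (Suc D)"
proof -
  have "u y = (\<Sum>S\<in>small_sets (Suc D). (if S \<in> X then u S else 0) * superset_vec S y)" for y
  proof (cases "y \<in> X")
    case True
    have "S \<in> X \<Longrightarrow> S \<subseteq> y \<Longrightarrow> S = y" for S
      using True by (metis finite_vertex mem_X_iff card_subset_eq)
    then have "(\<Sum>S\<in>small_sets (Suc D). (if S \<in> X then u S else 0) * superset_vec S y)
        = (\<Sum>S\<in>small_sets (Suc D). if S = y then u S else 0)"
      using True by (intro sum.cong) (auto simp: superset_vec_def)
    also have "\<dots> = u y" using True finite_small_sets by (simp add: small_sets_def mem_X_iff)
    finally show ?thesis by simp
  qed (use u in \<open>simp add: vanishes_off_X_def superset_vec_def\<close>)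
  then show ?thesis unfolding span_below_def mem_Collect_eq by (intro exI ext)
qed

lemma superset_vec_eq_0:
  assumes "D < card S"
  shows "superset_vec S = (\<lambda>y. 0)"
proof -
  have "\<not> S \<subseteq> y" if "y \<in> X" for y
  proof
    assume "S \<subseteq> y"
    then have "card S \<le> D" using that card_mono[OF finite_vertex] by (metis mem_X_iff)
    then show False using assms by simp
  qed
  then show ?thesis by (auto simp: superset_vec_def)
qed

lemma A_superset_vec_count:
  assumes y: "y \<in> X"
  shows "A (superset_vec S) y
       = of_nat (card (y - S)) * of_nat (card {b \<in> {1..N} - y. S - y \<subseteq> {b}})"
proof -
  have fy: "finite y" using y finite_vertex by auto
  have "\<And>a b. a \<in> y \<Longrightarrow> b \<in> {1..N} - y \<Longrightarrow> (S \<subseteq> insert b (y - {a})) = (S - y \<subseteq> {b} \<and> a \<notin> S)"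
    by auto
  then have "A (superset_vec S) y = (\<Sum>a\<in>y. \<Sum>b\<in>{1..N} - y. if S - y \<subseteq> {b} \<and> a \<notin> S then 1 else 0)"
    using y by (auto simp: A_eq_swap_sum superset_vec_def swap_mem_X intro!: sum.cong)
  also have "\<dots> = (\<Sum>a\<in>y. if a \<notin> S then of_nat (card {b \<in> {1..N} - y. S - y \<subseteq> {b}}) else 0)"
    by (rule sum.cong[OF refl]) (simp add: sum_if_const)
  also have "\<dots> = of_nat (card (y - S)) * of_nat (card {b \<in> {1..N} - y. S - y \<subseteq> {b}})"
    using fy by (simp add: sum_if_const set_diff_eq)
  finally show ?thesis .
qed

lemma superset_vec_remove_sum:
  assumes "finite S" "y \<in> X"
  shows "(\<Sum>b\<in>S. superset_vec (S - {b}) y) = of_nat (card {b \<in> S. S - y \<subseteq> {b}})"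
proof -
  have "(\<Sum>b\<in>S. superset_vec (S - {b}) y) = (\<Sum>b\<in>S. if S - y \<subseteq> {b} then 1 else 0)"
    using assms by (auto simp: superset_vec_def intro!: sum.cong)
  then show ?thesis using assms by (simp add: sum_if_const)
qed

lemma eig_decomposition:
  assumes "s \<le> D"
  shows "of_nat ((D - s) * (N - D)) = eig s + (of_nat D - of_nat s + 1) * of_nat s"
proof -
  have "real ((D - s) * (N - D)) = (real D - real s) * (real N - real D)"
    using assms N_ge by (simp only: of_nat_mult of_nat_diff)
  then have "real ((D - s) * (N - D)) = johnson_theta N D s + (real D - real s + 1) * real s"
    by (simp add: johnson_theta_def algebra_simps)
  then have "complex_of_real (real ((D - s) * (N - D)))
      = complex_of_real (johnson_theta N D s + (real D - real s + 1) * real s)"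
    by (rule arg_cong)
  then show ?thesis by (simp add: eig_def)
qed

lemma A_superset_vec_at:
  assumes S: "S \<subseteq> {1..N}" "card S \<le> D" and y: "y \<in> X"
  shows "A (superset_vec S) y
       = eig (card S) * superset_vec S y
         + (of_nat D - of_nat (card S) + 1) * (\<Sum>b\<in>S. superset_vec (S - {b}) y)"
proof -
  have fS: "finite S" using S finite_subset by blast
  have fy: "finite y" and yN: "y \<subseteq> {1..N}" and cy: "card y = D"
    using y mem_X_iff finite_vertex by auto
  note count = A_superset_vec_count[OF y, of S]
  note lower = superset_vec_remove_sum[OF fS y]
  consider "S \<subseteq> y" | "card (S - y) = 1" | "\<not> S \<subseteq> y" "card (S - y) \<noteq> 1" by blast
  then show ?thesis
  proof cases
    case 1
    have "card (y - S) = D - card S" "card ({1..N} - y) = N - D"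
      using 1 fy cy yN fS by (simp_all add: card_Diff_subset)
    moreover have "{b \<in> {1..N} - y. S - y \<subseteq> {b}} = {1..N} - y" "{b \<in> S. S - y \<subseteq> {b}} = S"
      using 1 by auto
    moreover have "superset_vec S y = 1" using 1 y by (simp add: superset_vec_def)
    ultimately show ?thesis using count lower eig_decomposition[OF S(2)] by simp
  next
    case 2
    then obtain c where c: "S - y = {c}" using card_1_singletonE by blast
    have "card S = card (S \<inter> y) + 1" using 2 card_Int_Diff[OF fS, of y] by simp
    then have "card (y - S) = D + 1 - card S"
      using fy cy by (simp add: card_Diff_subset_Int Int_commute)
    moreover have "{b \<in> {1..N} - y. S - y \<subseteq> {b}} = {c}" "{b \<in> S. S - y \<subseteq> {b}} = {c}"
      using c S by auto
    moreover have "superset_vec S y = 0" using c by (auto simp: superset_vec_def)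
    ultimately show ?thesis using count lower S by (simp add: of_nat_diff)
  next
    case 3
    then have "\<not> S - y \<subseteq> {b}" for b using subset_singletonD by fastforce
    moreover have "superset_vec S y = 0" using 3 by (auto simp: superset_vec_def)
    ultimately show ?thesis using count lower by simp
  qed
qed

lemma A_shift_superset_vec:
  assumes "S \<subseteq> {1..N}" "card S \<le> D"
  shows "A_shift (card S) (superset_vec S)
       = (\<lambda>y. (of_nat D - of_nat (card S) + 1) * (\<Sum>b\<in>S. superset_vec (S - {b}) y))"
proof
  fix y show "A_shift (card S) (superset_vec S) y
      = (of_nat D - of_nat (card S) + 1) * (\<Sum>b\<in>S. superset_vec (S - {b}) y)"
    using A_superset_vec_at[OF assms]
    by (cases "y \<in> X") (simp_all add: A_shift_def A_outside superset_vec_def)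
qed

lemma A_shift_superset_vec_in_span_below:
  assumes S: "S \<subseteq> {1..N}"
  shows "A_shift (card S) (superset_vec S) \<in> span_below (card S)"
proof (cases "card S \<le> D")
  case True
  have fS: "finite S" using S finite_subset by blast
  have "superset_vec (S - {b}) \<in> span_below (card S)" if "b \<in> S" for b
  proof (rule superset_vec_in_span_below)
    show "card (S - {b}) < card S" using that fS by (rule card_Diff1_less[rotated])
  qed (use S in auto)
  then show ?thesis
    unfolding A_shift_superset_vec[OF S True] by (intro span_below_scale span_below_sum)
next
  case False
  then show ?thesis
    using superset_vec_eq_0[of S] by (simp add: linear_op_zero[OF linear_A_shift] span_below_zero)
qed

lemma A_shift_span_below_sum:
  assumes "u \<in> span_below i"
    and "\<And>S. S \<in> small_sets i \<Longrightarrow> A_shift l (superset_vec S) \<in> span_below j"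
  shows "A_shift l u \<in> span_below j"
proof -
  obtain f where u: "u = (\<lambda>y. \<Sum>S\<in>small_sets i. f S * superset_vec S y)"
    using assms by (auto simp: span_below_def)
  show ?thesis
    unfolding u linear_op_sum[OF linear_A_shift] linear_op_scale[OF linear_A_shift]
    by (intro span_below_sum span_below_scale assms(2))
qed

lemma A_shift_span_below: "u \<in> span_below i \<Longrightarrow> A_shift l u \<in> span_below i"
proof (erule A_shift_span_below_sum)
  fix S assume "S \<in> small_sets i"
  then have S: "S \<subseteq> {1..N}" "card S < i" by (auto simp: small_sets_def)
  have "A_shift l (superset_vec S)
      = (\<lambda>y. A_shift (card S) (superset_vec S) y + (eig (card S) - eig l) * superset_vec S y)"
    by (simp add: A_shift_def fun_eq_iff algebra_simps)
  then show "A_shift l (superset_vec S) \<in> span_below i"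
    using S span_below_mono[OF A_shift_superset_vec_in_span_below]
    by (auto intro!: span_below_add span_below_scale superset_vec_in_span_below)
qed

lemma A_shift_lowers_span_below:
  "u \<in> span_below (Suc i) \<Longrightarrow> A_shift i u \<in> span_below i"
proof (erule A_shift_span_below_sum)
  fix S assume "S \<in> small_sets (Suc i)"
  then have S: "S \<subseteq> {1..N}" "card S \<le> i" by (auto simp: small_sets_def)
  then show "A_shift i (superset_vec S) \<in> span_below i"
  proof (cases "card S = i")
    case False
    then show ?thesis using S by (intro A_shift_span_below superset_vec_in_span_below) auto
  qed (use A_shift_superset_vec_in_span_below[OF S(1)] in simp)
qed

lemma A_shift_prod_upt_kills: "u \<in> span_below i \<Longrightarrow> A_shift_prod [0..<i] u = (\<lambda>y. 0)"
proof (induction i arbitrary: u)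
  case 0
  then show ?case using span_below_0[OF 0] by (simp add: restrict_X_def)
next
  case (Suc i)
  have "A_shift_prod [0..<Suc i] u = A_shift_prod [0..<i] (A_shift i u)"
    using span_below_vanishes[OF Suc.prems] by (simp add: A_shift_prod_append)
  then show ?case using Suc.IH A_shift_lowers_span_below[OF Suc.prems] by simp
qed

lemma E_kills_span_below:
  assumes "u \<in> span_below i" "i \<le> j" "i \<le> Suc D"
  shows "E j u = (\<lambda>y. 0)"
proof -
  have "[0..<Suc D] = [0..<i] @ [i..<Suc D]"
    using assms upt_add_eq_append[of 0 i "Suc D - i"] by simp
  then have "E_factors j = [0..<i] @ filter (\<lambda>l. l \<noteq> j) [i..<Suc D]"
    using assms by (simp add: filter_True)
  then have "A_shift_prod (E_factors j) u
      = A_shift_prod (filter (\<lambda>l. l \<noteq> j) [i..<Suc D]) (A_shift_prod [0..<i] u)"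
    by (simp add: A_shift_prod_append A_shift_prod_commute)
  then show ?thesis
    using A_shift_prod_upt_kills[OF assms(1)]
    by (simp add: E_eq_A_shift_prod linear_op_zero[OF linear_A_shift_prod])
qed

lemma A_shift_E: assumes "j \<le> D" shows "A_shift j (E j u) = (\<lambda>y. 0)"
proof -
  have "A_shift_prod (E_factors j) (A_shift j u) = A_shift_prod [0..<Suc D] u"
    using A_shift_prod_remove1[of j "[0..<Suc D]" u] assms
    by (simp add: remove1_eq_filter del: upt_Suc)
  also have "\<dots> = A_shift_prod [0..<Suc D] (restrict_X u)" by simp
  also have "\<dots> = (\<lambda>y. 0)" by (rule A_shift_prod_upt_kills[OF span_below_Suc_D]) simp
  finally show ?thesis
    by (simp add: E_eq_A_shift_prod linear_op_scale[OF linear_A_shift] A_shift_prod_A_shift)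
qed

lemma Eprod_eigvec:
  assumes "j \<le> D" "vanishes_off_X w" "A_shift j w = (\<lambda>y. 0)" "set L \<subseteq> {..D}"
  shows "johnson_Eprod N D j L w = w"
  using assms(4)
proof (induction L)
  case (Cons l L)
  then have IH: "johnson_Eprod N D j L w = w" and "l \<le> D" by simp_all
  then have "l \<noteq> j \<Longrightarrow> eig j - eig l \<noteq> 0" using eig_inj[OF assms(1)] by auto
  moreover have "A w y = eig j * w y" for y
    using assms(3) by (simp add: A_shift_def fun_eq_iff)
  ultimately show ?case
    by (simp add: IH Let_def eig_def[symmetric] fun_eq_iff field_simps)
qed (use assms(2) in \<open>simp add: restrict_X_def[symmetric]\<close>)

lemma E_eigvec: "j \<le> D \<Longrightarrow> vanishes_off_X w \<Longrightarrow> A_shift j w = (\<lambda>y. 0) \<Longrightarrow> E j w = w"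
  unfolding johnson_E_def by (rule Eprod_eigvec) auto

lemma E_idem: "j \<le> D \<Longrightarrow> E j (E j u) = E j u"
  by (rule E_eigvec) (simp_all add: A_shift_E)

lemma Eprod_minus_id_in_span_below:
  assumes "i \<le> D" "vanishes_off_X w" "A_shift i w \<in> span_below i" "set L \<subseteq> {..D}"
  shows "\<exists>u\<in>span_below i. johnson_Eprod N D i L w = (\<lambda>y. w y + u y)"
  using assms(4)
proof (induction L)
  case Nil
  have "johnson_Eprod N D i [] w = (\<lambda>y. w y + 0)"
    using assms(2) by (simp add: restrict_X_def[symmetric])
  then show ?case by (intro bexI[OF _ span_below_zero])
next
  case (Cons l L)
  then obtain u where u: "u \<in> span_below i" "johnson_Eprod N D i L w = (\<lambda>y. w y + u y)"
    and lD: "l \<le> D" by auto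
  show ?case
  proof (cases "l = i")
    case False
    let ?u = "\<lambda>y. (1 / (eig i - eig l)) * (A_shift i w y + A_shift l u y)"
    have "eig i - eig l \<noteq> 0" using eig_inj[OF assms(1) lD] False by auto
    then have "johnson_Eprod N D i (l # L) w = (\<lambda>y. w y + ?u y)"
      using False by (simp add: u(2) Let_def eig_def[symmetric] linear_op_add[OF linear_A]
          A_shift_def fun_eq_iff field_simps)
    moreover have "?u \<in> span_below i"
      by (intro span_below_scale span_below_add assms(3) A_shift_span_below u)
    ultimately show ?thesis by (rule bexI[of _ ?u])
  qed (use u in auto)
qed

lemma E_minus_id_in_span_below:
  assumes "i \<le> D" "u \<in> span_below (Suc i)"
  shows "\<exists>u'\<in>span_below i. E i u = (\<lambda>y. u y + u' y)"
  unfolding johnson_E_def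
  using assms span_below_vanishes A_shift_lowers_span_below
  by (intro Eprod_minus_id_in_span_below) auto

lemma span_below_descend:
  assumes "\<And>i. j \<le> i \<Longrightarrow> i \<le> D \<Longrightarrow> u \<in> span_below (Suc i) \<Longrightarrow> u \<in> span_below i"
    and "vanishes_off_X u" "k \<le> Suc D - j"
  shows "u \<in> span_below (Suc D - k)"
  using assms(3)
proof (induction k)
  case 0
  then show ?case using span_below_Suc_D[OF assms(2)] by simp
next
  case (Suc k)
  then show ?case using assms(1)[of "D - k"] by (simp add: Suc_diff_le)
qed

lemma eq_zero_if_all_E_zero:
  assumes w: "vanishes_off_X w" and E0: "\<And>l. l \<le> D \<Longrightarrow> E l w = (\<lambda>y. 0)"
  shows "w = (\<lambda>y. 0)"
proof -
  have "w \<in> span_below i" if i: "i \<le> D" "w \<in> span_below (Suc i)" for i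
  proof -
    obtain u where u: "u \<in> span_below i" "E i w = (\<lambda>y. w y + u y)"
      using E_minus_id_in_span_below[OF i] by blast
    then have "(\<lambda>y. w y + u y) = (\<lambda>y. 0)" using E0[OF i(1)] by simp
    then have "w = (\<lambda>y. (-1) * u y)" by (simp add: fun_eq_iff add_eq_0_iff)
    then show ?thesis using span_below_scale[OF u(1), of "-1"] by simp
  qed
  then have "w \<in> span_below (Suc D - Suc D)" using span_below_descend[of 0 w "Suc D"] w by simp
  then show ?thesis by (simp add: span_below_0)
qed

lemma eigvec_in_span_below:
  assumes j: "j \<le> D" and u: "vanishes_off_X u" and e: "A_shift j u = (\<lambda>y. 0)"
  shows "u \<in> span_below (Suc j)"
proof -
  have "u \<in> span_below i" if "Suc j \<le> i" "i \<le> D" "u \<in> span_below (Suc i)" for i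
  proof -
    have ne: "eig j - eig i \<noteq> 0" using eig_inj[OF j that(2)] that by auto
    have "A_shift i u = (\<lambda>y. (eig j - eig i) * u y)"
      using e by (simp add: A_shift_def fun_eq_iff algebra_simps)
    then have "u = (\<lambda>y. (1 / (eig j - eig i)) * A_shift i u y)"
      using ne by (simp add: fun_eq_iff)
    then show ?thesis using span_below_scale[OF A_shift_lowers_span_below[OF that(3)]] by metis
  qed
  then have "u \<in> span_below (Suc D - (D - j))"
    using span_below_descend[of "Suc j" u "D - j"] u by simp
  then show ?thesis using j by (simp add: Suc_diff_le)
qed

lemma E_in_span_below: "j \<le> D \<Longrightarrow> E j u \<in> span_below (Suc j)"
  by (rule eigvec_in_span_below) (simp_all add: A_shift_E)

lemma E_zero_if_orth_span_below:
  assumes orth: "\<forall>u\<in>span_below i. iprod v u = 0" and "j < i" "j \<le> D"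
  shows "E j v = (\<lambda>y. 0)"
proof -
  have "iprod (E j v) (E j v) = iprod v (E j (E j v))" by (rule E_self_adjoint)
  also have "\<dots> = 0"
    using orth span_below_mono[OF E_in_span_below] assms by (simp add: E_idem)
  finally show ?thesis by (rule iprod_self_eq_zero[OF E_vanishes])
qed

lemma orth_span_below_if_E_zero:
  assumes "\<And>j. j < i \<Longrightarrow> E j v = (\<lambda>y. 0)" "i \<le> Suc D"
  shows "\<forall>u\<in>span_below i. iprod v u = 0"
  using assms
proof (induction i)
  case 0
  show ?case using span_below_0 by force
next
  case (Suc i)
  show ?case
  proof
    fix u assume u: "u \<in> span_below (Suc i)"
    obtain u' where u': "u' \<in> span_below i" "E i u = (\<lambda>y. u y + u' y)"
      using E_minus_id_in_span_below[OF _ u] Suc.prems by auto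
    then have "iprod v u = iprod v (E i u) - iprod v u'"
      by (simp add: iprod_diff_right[symmetric])
    also have "iprod v (E i u) = iprod (E i v) u" by (simp add: E_self_adjoint)
    finally show "iprod v u = 0" using Suc u' by simp
  qed
qed

lemma A_shift_prod_kills_spectrum:
  assumes "\<And>l. l \<le> D \<Longrightarrow> E l v \<noteq> (\<lambda>y. 0) \<Longrightarrow> l \<in> set L"
  shows "A_shift_prod L v = (\<lambda>y. 0)"
proof (rule eq_zero_if_all_E_zero)
  fix l assume l: "l \<le> D"
  show "E l (A_shift_prod L v) = (\<lambda>y. 0)"
  proof (cases "E l v = (\<lambda>y. 0)")
    case True
    then show ?thesis by (simp add: E_A_shift_prod linear_op_zero[OF linear_A_shift_prod])
  next
    case False
    then have "A_shift_prod L (E l v) = A_shift_prod (remove1 l L) (A_shift l (E l v))"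
      using assms l by (intro A_shift_prod_remove1) auto
    then show ?thesis
      by (simp add: E_A_shift_prod A_shift_E[OF l] linear_op_zero[OF linear_A_shift_prod])
  qed
qed simp

end

section \<open>Harmonic functions on the subsets of a finite set\<close>

lemma sum_level_insert_reindex:
  assumes P: "finite P"
  shows "(\<Sum>R\<in>{R. U \<subseteq> R \<and> R \<subseteq> P \<and> card R = m}. \<Sum>b\<in>P - R. g (insert b R) R)
       = (\<Sum>T\<in>{T. U \<subseteq> T \<and> T \<subseteq> P \<and> card T = Suc m}. \<Sum>a\<in>T - U. g T (T - {a}))"
proof -
  have fin: "finite {R. U \<subseteq> R \<and> R \<subseteq> P \<and> card R = k}" for k
    by (rule finite_subset[of _ "Pow P"]) (auto simp: P)
  have "(\<Sum>R\<in>{R. U \<subseteq> R \<and> R \<subseteq> P \<and> card R = m}. \<Sum>b\<in>P - R. g (insert b R) R)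
      = (\<Sum>(R, b)\<in>Sigma {R. U \<subseteq> R \<and> R \<subseteq> P \<and> card R = m} (\<lambda>R. P - R). g (insert b R) R)"
    using fin P by (subst sum.Sigma) auto
  also have "\<dots> = (\<Sum>(T, a)\<in>Sigma {T. U \<subseteq> T \<and> T \<subseteq> P \<and> card T = Suc m} (\<lambda>T. T - U).
                    g T (T - {a}))"
  proof (rule sum.reindex_bij_witness[where i="\<lambda>(T, a). (T - {a}, a)" and j="\<lambda>(R, b). (insert b R, b)"])
    fix p assume "p \<in> Sigma {T. U \<subseteq> T \<and> T \<subseteq> P \<and> card T = Suc m} (\<lambda>T. T - U)"
    then show "(case p of (T, a) \<Rightarrow> (T - {a}, a)) \<in> Sigma {R. U \<subseteq> R \<and> R \<subseteq> P \<and> card R = m} (\<lambda>R. P - R)"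
      using finite_subset[OF _ P] by (auto simp: card_Diff_singleton)
  next
    fix p assume "p \<in> Sigma {R. U \<subseteq> R \<and> R \<subseteq> P \<and> card R = m} (\<lambda>R. P - R)"
    then show "(case p of (R, b) \<Rightarrow> (insert b R, b))
        \<in> Sigma {T. U \<subseteq> T \<and> T \<subseteq> P \<and> card T = Suc m} (\<lambda>T. T - U)"
      using finite_subset[OF _ P] by auto
  qed auto
  also have "\<dots> = (\<Sum>T\<in>{T. U \<subseteq> T \<and> T \<subseteq> P \<and> card T = Suc m}. \<Sum>a\<in>T - U. g T (T - {a}))"
    using fin P by (subst sum.Sigma) (auto intro: finite_subset)
  finally show ?thesis .
qed

lemma sum_Pow_insert_reindex:
  assumes "finite S"
  shows "(\<Sum>R\<in>Pow S. \<Sum>b\<in>S - R. g (insert b R) R) = (\<Sum>T\<in>Pow S. \<Sum>a\<in>T. g T (T - {a}))"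
proof -
  have "(\<Sum>R\<in>Pow S. \<Sum>b\<in>S - R. g (insert b R) R) = (\<Sum>(R, b)\<in>Sigma (Pow S) (\<lambda>R. S - R). g (insert b R) R)"
    using assms by (subst sum.Sigma) auto
  also have "\<dots> = (\<Sum>(T, a)\<in>Sigma (Pow S) (\<lambda>T. T). g T (T - {a}))"
    by (rule sum.reindex_bij_witness[where i="\<lambda>(T, a). (T - {a}, a)" and j="\<lambda>(R, b). (insert b R, b)"])
       auto
  also have "\<dots> = (\<Sum>T\<in>Pow S. \<Sum>a\<in>T. g T (T - {a}))"
    using assms by (subst sum.Sigma) (auto intro: finite_subset)
  finally show ?thesis .
qed

locale harmonic_function =
  fixes P :: "'a set" and r :: nat and h :: "'a set \<Rightarrow> complex"
  assumes finite_P: "finite P"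
    and degree_pos: "1 \<le> r"
    and support: "\<And>T. h T \<noteq> 0 \<Longrightarrow> T \<subseteq> P \<and> card T = r"
    and harmonic: "\<And>R. R \<subseteq> P \<Longrightarrow> card R + 1 = r \<Longrightarrow> (\<Sum>b\<in>P - R. h (insert b R)) = 0"
begin

lemma finite_subset_P: "S \<subseteq> P \<Longrightarrow> finite S"
  using finite_P finite_subset by blast

lemma harmonic_any_level: "R \<subseteq> P \<Longrightarrow> (\<Sum>b\<in>P - R. h (insert b R)) = 0"
proof (cases "card R + 1 = r")
  case False
  assume R: "R \<subseteq> P"
  have "h (insert b R) = 0" if "b \<in> P - R" for b
    using that False support[of "insert b R"] finite_subset_P[OF R] by auto
  then show ?thesis by simp
qed (use harmonic in blast)

definition hsum :: "'a set \<Rightarrow> complex" where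
  "hsum S = (\<Sum>T\<in>Pow S. h T)"

lemma hsum_remove_sum:
  assumes S: "finite S"
  shows "(\<Sum>a\<in>S. hsum (S - {a})) = (of_nat (card S) - of_nat r) * hsum S"
proof -
  have "(\<Sum>a\<in>S. hsum (S - {a})) = (\<Sum>a\<in>S. \<Sum>T\<in>Pow S. if a \<notin> T then h T else 0)"
  proof (rule sum.cong[OF refl])
    fix a assume "a \<in> S"
    have "Pow (S - {a}) = {T \<in> Pow S. a \<notin> T}" by auto
    then show "hsum (S - {a}) = (\<Sum>T\<in>Pow S. if a \<notin> T then h T else 0)"
      unfolding hsum_def using S by (simp only: sum.inter_filter finite_Pow_iff)
  qed
  also have "\<dots> = (\<Sum>T\<in>Pow S. \<Sum>a\<in>S. if a \<notin> T then h T else 0)" by (rule sum.swap)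
  also have "\<dots> = (\<Sum>T\<in>Pow S. (of_nat (card S) - of_nat r) * h T)"
  proof (rule sum.cong[OF refl])
    fix T assume T: "T \<in> Pow S"
    have "{a \<in> S. a \<notin> T} = S - T" by auto
    moreover have "h T \<noteq> 0 \<Longrightarrow> card (S - T) = card S - r \<and> r \<le> card S"
      using T S support[of T] by (auto simp: card_Diff_subset finite_subset card_mono)
    ultimately show "(\<Sum>a\<in>S. if a \<notin> T then h T else 0) = (of_nat (card S) - of_nat r) * h T"
      using S by (cases "h T = 0") (simp_all add: sum_if_const of_nat_diff)
  qed
  finally show ?thesis by (simp add: hsum_def sum_distrib_left)
qed

lemma hsum_insert:
  assumes S: "finite S" and b: "b \<notin> S"
  shows "hsum (insert b S) = hsum S + (\<Sum>R\<in>Pow S. h (insert b R))"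
proof -
  have "hsum (insert b S) = (\<Sum>T\<in>Pow S. h T) + (\<Sum>T\<in>insert b ` Pow S. h T)"
    unfolding hsum_def Pow_insert using S b by (intro sum.union_disjoint) auto
  also have "(\<Sum>T\<in>insert b ` Pow S. h T) = (\<Sum>R\<in>Pow S. h (insert b R))"
    using b by (intro sum.reindex_cong[of "insert b"]) (auto simp: inj_on_def)
  finally show ?thesis by (simp add: hsum_def)
qed

lemma hsum_insert_sum:
  assumes S: "S \<subseteq> P"
  shows "(\<Sum>b\<in>P - S. hsum (insert b S)) = (of_nat (card P) - of_nat (card S) - of_nat r) * hsum S"
proof -
  have fS: "finite S" using finite_subset_P[OF S] .
  have split: "(\<Sum>b\<in>P - S. h (insert b R)) = - (\<Sum>b\<in>S - R. h (insert b R))" if "R \<subseteq> S" for R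
  proof -
    have "P - R = (P - S) \<union> (S - R)" "(P - S) \<inter> (S - R) = {}" using that S by auto
    then have "(\<Sum>b\<in>P - R. h (insert b R)) = (\<Sum>b\<in>P - S. h (insert b R)) + (\<Sum>b\<in>S - R. h (insert b R))"
      using finite_P fS by (simp add: sum.union_disjoint)
    then show ?thesis using harmonic_any_level[of R] that S by (simp add: eq_neg_iff_add_eq_0)
  qed
  have "(\<Sum>b\<in>P - S. hsum (insert b S))
      = of_nat (card (P - S)) * hsum S + (\<Sum>R\<in>Pow S. \<Sum>b\<in>P - S. h (insert b R))"
    using fS by (simp add: hsum_insert sum.distrib sum.swap[of _ "P - S"])
  also have "(\<Sum>R\<in>Pow S. \<Sum>b\<in>P - S. h (insert b R)) = - (\<Sum>R\<in>Pow S. \<Sum>b\<in>S - R. h (insert b R))"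
    using split by (simp add: sum_negf)
  also have "(\<Sum>R\<in>Pow S. \<Sum>b\<in>S - R. h (insert b R)) = (\<Sum>T\<in>Pow S. \<Sum>a\<in>T. h T)"
    using sum_Pow_insert_reindex[OF fS, of "\<lambda>T R. h T"] by simp
  also have "\<dots> = of_nat r * hsum S"
    using support by (force simp: hsum_def sum_distrib_left intro!: sum.cong)
  finally show ?thesis
    using card_mono[OF finite_P S] fS by (simp add: card_Diff_subset S of_nat_diff algebra_simps)
qed

lemma hsum_below_degree: "finite S \<Longrightarrow> card S < r \<Longrightarrow> hsum S = 0"
  unfolding hsum_def
proof (intro sum.neutral ballI)
  fix T assume "finite S" "card S < r" "T \<in> Pow S"
  then have "card T \<noteq> r" using card_mono[of S T] by auto
  then show "h T = 0" using support by blast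
qed

lemma hsum_at_degree:
  assumes "finite T" "card T = r"
  shows "hsum T = h T"
proof -
  have "h T' = 0" if "T' \<in> Pow T - {T}" for T'
    using that assms support[of T'] card_subset_eq[of T T'] by auto
  then have "hsum T = (\<Sum>T'\<in>{T}. h T')"
    unfolding hsum_def using assms by (intro sum.mono_neutral_right) auto
  then show ?thesis by simp
qed

definition level_sum :: "'a set \<Rightarrow> nat \<Rightarrow> complex" where
  "level_sum U m = (\<Sum>S\<in>{S. U \<subseteq> S \<and> S \<subseteq> P \<and> card S = m}. hsum S)"

definition level_norm :: "nat \<Rightarrow> real" where
  "level_norm m = (\<Sum>S\<in>{S. S \<subseteq> P \<and> card S = m}. (cmod (hsum S))\<^sup>2)"

lemma finite_level: "finite {S. U \<subseteq> S \<and> S \<subseteq> P \<and> card S = m}"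
  by (rule finite_subset[of _ "Pow P"]) (auto simp: finite_P)

lemma level_sum_recurrence:
  assumes U: "U \<subseteq> P"
  shows "(of_nat (Suc m) - of_nat (card U)) * level_sum U (Suc m)
       = (of_nat (card P) - of_nat m - of_nat r) * level_sum U m"
proof -
  have "(of_nat (card P) - of_nat m - of_nat r) * level_sum U m
      = (\<Sum>R\<in>{R. U \<subseteq> R \<and> R \<subseteq> P \<and> card R = m}. \<Sum>b\<in>P - R. hsum (insert b R))"
    by (simp add: level_sum_def sum_distrib_left hsum_insert_sum)
  also have "\<dots> = (\<Sum>T\<in>{T. U \<subseteq> T \<and> T \<subseteq> P \<and> card T = Suc m}. \<Sum>a\<in>T - U. hsum T)"
    by (rule sum_level_insert_reindex[OF finite_P])
  also have "\<dots> = (\<Sum>T\<in>{T. U \<subseteq> T \<and> T \<subseteq> P \<and> card T = Suc m}.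
                    (of_nat (Suc m) - of_nat (card U)) * hsum T)"
  proof (rule sum.cong[OF refl])
    fix T assume T: "T \<in> {T. U \<subseteq> T \<and> T \<subseteq> P \<and> card T = Suc m}"
    then have "finite T" using finite_subset_P by blast
    then have "card (T - U) = Suc m - card U" "card U \<le> Suc m"
      using T card_mono[of T U] by (auto simp: card_Diff_subset finite_subset)
    then show "(\<Sum>a\<in>T - U. hsum T) = (of_nat (Suc m) - of_nat (card U)) * hsum T"
      by (simp add: of_nat_diff)
  qed
  finally show ?thesis by (simp add: level_sum_def sum_distrib_left)
qed

lemma level_norm_recurrence:
  "(real m + 1 - real r) * level_norm (Suc m) = (real (card P) - real m - real r) * level_norm m"
proof -
  let ?n = "\<lambda>S. hsum S * cnj (hsum S)"
  have norm: "complex_of_real (level_norm k) = (\<Sum>S\<in>{S. {} \<subseteq> S \<and> S \<subseteq> P \<and> card S = k}. ?n S)"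
    for k
    unfolding level_norm_def of_real_sum complex_norm_square by simp
  have level: "(\<Sum>b\<in>P - R. hsum R * cnj (hsum (insert b R)))
      = (of_nat (card P) - of_nat m - of_nat r) * ?n R" if "R \<subseteq> P" "card R = m" for R
  proof -
    have "(\<Sum>b\<in>P - R. hsum R * cnj (hsum (insert b R))) = hsum R * cnj (\<Sum>b\<in>P - R. hsum (insert b R))"
      by (simp add: cnj_sum sum_distrib_left)
    then show ?thesis using that by (simp add: hsum_insert_sum)
  qed
  have "(of_nat (card P) - of_nat m - of_nat r) * complex_of_real (level_norm m)
      = (\<Sum>R\<in>{R. {} \<subseteq> R \<and> R \<subseteq> P \<and> card R = m}. \<Sum>b\<in>P - R. hsum R * cnj (hsum (insert b R)))"
    unfolding norm sum_distrib_left by (rule sum.cong) (simp_all add: level)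
  also have "\<dots> = (\<Sum>T\<in>{T. {} \<subseteq> T \<and> T \<subseteq> P \<and> card T = Suc m}. \<Sum>a\<in>T. hsum (T - {a}) * cnj (hsum T))"
    using sum_level_insert_reindex[OF finite_P, where U="{}" and g="\<lambda>T R. hsum R * cnj (hsum T)"] by simp
  also have "\<dots> = (of_nat m + 1 - of_nat r) * complex_of_real (level_norm (Suc m))"
    unfolding norm using finite_subset_P
    by (simp add: sum_distrib_left flip: sum_distrib_right) (simp add: hsum_remove_sum algebra_simps)
  finally have "complex_of_real ((real m + 1 - real r) * level_norm (Suc m))
      = complex_of_real ((real (card P) - real m - real r) * level_norm m)"
    by simp
  then show ?thesis by (simp only: of_real_eq_iff)
qed

lemma level_norm_nonneg: "0 \<le> level_norm m"
  unfolding level_norm_def by (rule sum_nonneg) simp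

lemma hsum_zero_if_level_norm_zero:
  "level_norm m = 0 \<Longrightarrow> S \<subseteq> P \<Longrightarrow> card S = m \<Longrightarrow> hsum S = 0"
  unfolding level_norm_def using finite_level[of "{}" m] by (simp add: sum_nonneg_eq_0_iff)

lemma h_zero_if_degree_large:
  assumes "card P < 2 * r"
  shows "h T = 0"
proof (rule ccontr)
  assume hT: "h T \<noteq> 0"
  then have T: "T \<subseteq> P" "card T = r" using support by auto
  then have "r \<le> card P" using card_mono[OF finite_P] by auto
  then have eq: "level_norm (Suc r) = (real (card P) - 2 * real r) * level_norm r"
    using level_norm_recurrence[of r] by simp
  have neg: "real (card P) - 2 * real r < 0" using assms by linarith
  have "\<not> level_norm r > 0"
  proof
    assume "level_norm r > 0"
    then have "level_norm (Suc r) < 0" using eq neg by (simp add: mult_neg_pos)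
    then show False using level_norm_nonneg[of "Suc r"] by simp
  qed
  then have "level_norm r = 0" using level_norm_nonneg[of r] by simp
  then have "hsum T = 0" using T by (rule hsum_zero_if_level_norm_zero)
  then show False using hT T hsum_at_degree finite_subset_P by simp
qed

lemma hsum_zero_upward:
  assumes "\<And>S. S \<subseteq> P \<Longrightarrow> card S = k \<Longrightarrow> hsum S = 0" "r < k"
  shows "S \<subseteq> P \<Longrightarrow> card S = k + n \<Longrightarrow> hsum S = 0"
proof (induction n arbitrary: S)
  case 0
  then show ?case using assms(1) by simp
next
  case (Suc n)
  have fS: "finite S" using finite_subset_P[OF Suc.prems(1)] .
  have "hsum (S - {a}) = 0" if "a \<in> S" for a
    using Suc.IH[of "S - {a}"] Suc.prems that fS by auto
  then have "(\<Sum>a\<in>S. hsum (S - {a})) = 0" by simp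
  then have "(of_nat (card S) - of_nat r) * hsum S = 0" using hsum_remove_sum[OF fS] by simp
  moreover have "card S \<noteq> r" using Suc.prems assms(2) by simp
  ultimately show ?case by simp
qed

lemma hsum_vanishes_above:
  assumes S: "S \<subseteq> P" and card_S: "card P - r < card S"
  shows "hsum S = 0"
proof (cases "card P < 2 * r")
  case True
  then show ?thesis by (simp add: hsum_def h_zero_if_degree_large)
next
  case False
  let ?k = "Suc (card P - r)"
  have "(real (card P) + 1 - 2 * real r) * level_norm ?k = 0"
    using level_norm_recurrence[of "card P - r"] False by (simp add: of_nat_diff algebra_simps)
  moreover have "real (card P) + 1 - 2 * real r \<noteq> 0" using False by linarith
  ultimately have "level_norm ?k = 0" by simp
  then have "hsum S' = 0" if "S' \<subseteq> P" "card S' = ?k" for S'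
    using hsum_zero_if_level_norm_zero that by blast
  moreover have "r < ?k" using False by simp
  ultimately show ?thesis using hsum_zero_upward[of ?k S "card S - ?k"] S card_S by simp
qed

lemma hsum_nonzero_level:
  assumes "h T \<noteq> 0" and "r \<le> m" "m \<le> card P - r"
  shows "\<exists>S. S \<subseteq> P \<and> card S = m \<and> hsum S \<noteq> 0"
proof -
  have "\<exists>S. S \<subseteq> P \<and> card S = r + n \<and> hsum S \<noteq> 0" if "r + n \<le> card P - r" for n
    using that
  proof (induction n)
    case 0
    have "T \<subseteq> P" "card T = r" using support assms(1) by auto
    then show ?case using hsum_at_degree finite_subset_P assms(1) by auto
  next
    case (Suc n)
    then obtain S where S: "S \<subseteq> P" "card S = r + n" "hsum S \<noteq> 0" by auto
    have "of_nat (card P) - of_nat (card S) - of_nat r \<noteq> (0::complex)"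
    proof
      assume "of_nat (card P) - of_nat (card S) - of_nat r = (0::complex)"
      then have "of_nat (card P) = (of_nat (card S + r) :: complex)"
        by (simp add: algebra_simps eq_diff_eq)
      then have "card P = card S + r" by (simp only: of_nat_eq_iff)
      then show False using S Suc.prems by simp
    qed
    then have "(\<Sum>b\<in>P - S. hsum (insert b S)) \<noteq> 0" using S hsum_insert_sum by simp
    then obtain b where "b \<in> P - S" "hsum (insert b S) \<noteq> 0" by (meson sum.neutral)
    moreover have "card (insert b S) = r + Suc n"
      using calculation S finite_subset_P by auto
    ultimately show ?case using S by (intro exI[of _ "insert b S"]) auto
  qed
  from this[of "m - r"] assms(2,3) show ?thesis by simp
qed

lemma level_sum_below_degree:
  assumes U: "U \<subseteq> P" "card U < r"
  shows "level_sum U m = 0"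
proof (induction m)
  case 0
  show ?case using degree_pos finite_subset_P
    by (auto simp: level_sum_def intro!: sum.neutral hsum_below_degree)
next
  case (Suc m)
  show ?case
  proof (cases "Suc m < r")
    case True
    then show ?thesis using finite_subset_P
      by (auto simp: level_sum_def intro!: sum.neutral hsum_below_degree)
  next
    case False
    then have "Suc m \<noteq> card U" using U by simp
    then have "of_nat (Suc m) - of_nat (card U) \<noteq> (0::complex)"
      by (simp only: right_minus_eq of_nat_eq_iff not_False_eq_True)
    then show ?thesis using level_sum_recurrence[OF U(1), of m] Suc.IH by simp
  qed
qed

lemma hsum_swap_sum:
  assumes S: "S \<subseteq> P" "card S = m"
  shows "(\<Sum>a\<in>S. \<Sum>b\<in>P - S. hsum (insert b (S - {a})))
       = ((of_nat (card P) - of_nat m + 1 - of_nat r) * (of_nat m - of_nat r) - of_nat m) * hsum S"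
proof -
  have fS: "finite S" using finite_subset_P[OF S(1)] .
  have "(\<Sum>b\<in>P - S. hsum (insert b (S - {a})))
      = (of_nat (card P) - of_nat m + 1 - of_nat r) * hsum (S - {a}) - hsum S" if a: "a \<in> S" for a
  proof -
    have "P - (S - {a}) = insert a (P - S)" using a S by auto
    then have split: "(\<Sum>b\<in>P - (S - {a}). hsum (insert b (S - {a})))
        = hsum S + (\<Sum>b\<in>P - S. hsum (insert b (S - {a})))"
      using finite_P a by (simp add: insert_absorb)
    have "card S \<noteq> 0" using a fS by auto
    then have "of_nat (card (S - {a})) = (of_nat m - 1 :: complex)"
      using a fS S by (simp add: of_nat_diff)
    moreover have "S - {a} \<subseteq> P" using S by auto
    ultimately have "(\<Sum>b\<in>P - (S - {a}). hsum (insert b (S - {a})))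
        = (of_nat (card P) - (of_nat m - 1) - of_nat r) * hsum (S - {a})"
      using hsum_insert_sum[of "S - {a}"] by simp
    then show ?thesis using split by (simp add: algebra_simps)
  qed
  then have "(\<Sum>a\<in>S. \<Sum>b\<in>P - S. hsum (insert b (S - {a})))
      = (of_nat (card P) - of_nat m + 1 - of_nat r) * (\<Sum>a\<in>S. hsum (S - {a})) - of_nat m * hsum S"
    using S by (simp add: sum_subtractf sum_distrib_left)
  then show ?thesis using hsum_remove_sum[OF fS] S by (simp add: algebra_simps)
qed

lemma hsum_whole_zero: "hsum P = 0"
  using hsum_insert_sum[of P] degree_pos by simp

end

section \<open>Designs from orthogonality to harmonic functions\<close>

lemma sum_count_insert:
  assumes P: "finite P" and I: "finite I" and B: "\<And>i. i \<in> I \<Longrightarrow> B i \<subseteq> P \<and> card (B i) = m"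
    and R: "R \<subseteq> P"
  shows "(\<Sum>b\<in>P - R. card {i \<in> I. insert b R \<subseteq> B i}) = (m - card R) * card {i \<in> I. R \<subseteq> B i}"
proof -
  have "(\<Sum>b\<in>P - R. card {i \<in> I. insert b R \<subseteq> B i})
      = (\<Sum>b\<in>P - R. \<Sum>i\<in>I. if insert b R \<subseteq> B i then 1 else 0)"
    using I by (simp add: sum_if_const)
  also have "\<dots> = (\<Sum>i\<in>I. \<Sum>b\<in>P - R. if insert b R \<subseteq> B i then 1 else 0)"
    by (rule sum.swap)
  also have "\<dots> = (\<Sum>i\<in>I. if R \<subseteq> B i then m - card R else 0)"
  proof (rule sum.cong[OF refl])
    fix i assume i: "i \<in> I"
    have "{b \<in> P - R. b \<in> B i} = B i - R" using B[OF i] by auto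
    moreover have "finite (B i)" "finite R" using B[OF i] R P finite_subset by auto
    ultimately show "(\<Sum>b\<in>P - R. if insert b R \<subseteq> B i then 1 else 0) = (if R \<subseteq> B i then m - card R else 0)"
      using B[OF i] P by (simp add: sum_if_const card_Diff_subset)
  qed
  finally show ?thesis using I by (simp add: sum_if_const)
qed

lemma sum_blocks_Pow:
  assumes "finite P" "finite I" "\<And>i. i \<in> I \<Longrightarrow> B i \<subseteq> P"
  shows "(\<Sum>i\<in>I. \<Sum>T\<in>Pow (B i). f T) = (\<Sum>T\<in>Pow P. of_nat (card {i \<in> I. T \<subseteq> B i}) * f T)"
proof -
  have "(\<Sum>T\<in>Pow (B i). f T) = (\<Sum>T\<in>Pow P. if T \<subseteq> B i then f T else 0)" if "i \<in> I" for i
  proof -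
    have "Pow (B i) = {T \<in> Pow P. T \<subseteq> B i}" using assms(3)[OF that] by auto
    then show ?thesis using assms(1) by (simp only: sum.inter_filter finite_Pow_iff)
  qed
  then have "(\<Sum>i\<in>I. \<Sum>T\<in>Pow (B i). f T) = (\<Sum>i\<in>I. \<Sum>T\<in>Pow P. if T \<subseteq> B i then f T else 0)"
    by simp
  also have "\<dots> = (\<Sum>T\<in>Pow P. \<Sum>i\<in>I. if T \<subseteq> B i then f T else 0)" by (rule sum.swap)
  also have "\<dots> = (\<Sum>T\<in>Pow P. of_nat (card {i \<in> I. T \<subseteq> B i}) * f T)"
    using assms(2) by (simp add: sum_if_const)
  finally show ?thesis .
qed

context
  fixes P :: "'a set" and I :: "'i set" and B :: "'i \<Rightarrow> 'a set" and m :: nat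
  assumes P: "finite P" and I: "finite I" and B: "\<And>i. i \<in> I \<Longrightarrow> B i \<subseteq> P \<and> card (B i) = m"
begin

abbreviation block_count :: "'a set \<Rightarrow> nat" where
  "block_count T \<equiv> card {i \<in> I. T \<subseteq> B i}"

lemma block_count_deviation_harmonic:
  assumes s: "s < card P" and c: "\<And>R. R \<subseteq> P \<Longrightarrow> card R = s \<Longrightarrow> block_count R = c"
  defines "\<mu> \<equiv> real ((m - s) * c) / real (card P - s)"
  shows "harmonic_function P (Suc s)
           (\<lambda>T. if T \<subseteq> P \<and> card T = Suc s then complex_of_real (real (block_count T) - \<mu>) else 0)"
proof
  fix R assume R: "R \<subseteq> P" "card R + 1 = Suc s"
  have fR: "finite R" using R P finite_subset by blast
  have "(\<Sum>b\<in>P - R. real (block_count (insert b R))) = real ((m - s) * c)"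
    using sum_count_insert[OF P I B R(1)] c[OF R(1)] R by (simp flip: of_nat_sum)
  moreover have "card (P - R) = card P - s" using R P by (simp add: card_Diff_subset fR)
  ultimately have zero: "(\<Sum>b\<in>P - R. real (block_count (insert b R)) - \<mu>) = 0"
    using s by (simp add: sum_subtractf \<mu>_def)
  have "insert b R \<subseteq> P \<and> card (insert b R) = Suc s" if "b \<in> P - R" for b
    using that fR R by simp
  then have "(\<Sum>b\<in>P - R. if insert b R \<subseteq> P \<and> card (insert b R) = Suc s
      then complex_of_real (real (block_count (insert b R)) - \<mu>) else 0)
      = complex_of_real (\<Sum>b\<in>P - R. real (block_count (insert b R)) - \<mu>)"
    unfolding of_real_sum by (intro sum.cong) auto
  then show "(\<Sum>b\<in>P - R. if insert b R \<subseteq> P \<and> card (insert b R) = Suc s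
      then complex_of_real (real (block_count (insert b R)) - \<mu>) else 0) = 0"
    by (simp only: zero of_real_0)
qed (use P in \<open>auto split: if_splits\<close>)

text \<open>Orthogonality gives \<open>\<Sum> f T * block_count T = 0\<close> and harmonicity \<open>\<Sum> f T = 0\<close>, so the
  squares of the deviations \<open>f T\<close> sum to zero.\<close>

lemma block_count_constant_if_orth:
  assumes harm: "harmonic_function P r f"
    and f: "\<And>T. f T = (if T \<subseteq> P \<and> card T = r then complex_of_real (real (block_count T) - \<mu>) else 0)"
    and orth: "(\<Sum>i\<in>I. \<Sum>T\<in>Pow (B i). f T) = 0"
  shows "\<exists>c. \<forall>T. T \<subseteq> P \<and> card T = r \<longrightarrow> block_count T = c"
proof -
  define level where "level T \<longleftrightarrow> T \<subseteq> P \<and> card T = r" for T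
  have "(\<Sum>T\<in>Pow P. of_nat (block_count T) * f T) = (\<Sum>i\<in>I. \<Sum>T\<in>Pow (B i). f T)"
    by (rule sum_blocks_Pow[OF P I, symmetric]) (use B in blast)
  then have "(\<Sum>T\<in>Pow P. of_nat (block_count T) * f T) = 0" using orth by simp
  moreover have "(\<Sum>T\<in>Pow P. f T) = 0"
    using harmonic_function.hsum_whole_zero[OF harm] by (simp add: harmonic_function.hsum_def[OF harm])
  ultimately have "(\<Sum>T\<in>Pow P. (of_nat (block_count T) - of_real \<mu>) * f T) = 0"
    by (simp add: left_diff_distrib sum_subtractf flip: sum_distrib_left)
  moreover have "(of_nat (block_count T) - of_real \<mu>) * f T
      = complex_of_real (if level T then (real (block_count T) - \<mu>)\<^sup>2 else 0)" for T
    by (simp add: f level_def power2_eq_square)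
  ultimately have "complex_of_real (\<Sum>T\<in>Pow P. if level T then (real (block_count T) - \<mu>)\<^sup>2 else 0) = 0"
    by (simp add: of_real_sum)
  then have "(\<Sum>T\<in>Pow P. if level T then (real (block_count T) - \<mu>)\<^sup>2 else 0) = 0"
    by (simp only: of_real_eq_0_iff)
  then have sq: "\<forall>T\<in>Pow P. (if level T then (real (block_count T) - \<mu>)\<^sup>2 else 0) = 0"
    using P by (subst (asm) sum_nonneg_eq_0_iff) simp_all
  have "block_count T = nat \<lfloor>\<mu>\<rfloor>" if "level T" for T
  proof -
    have "real (block_count T) = \<mu>" using that sq[rule_format, of T] by (simp add: level_def)
    then show ?thesis by (metis floor_of_nat nat_int)
  qed
  then show ?thesis by (auto simp: level_def)
qed

lemma block_count_constant:
  assumes t: "t \<le> card P"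
    and orth: "\<And>r f. 1 \<le> r \<Longrightarrow> r \<le> t \<Longrightarrow> harmonic_function P r f
                 \<Longrightarrow> (\<Sum>i\<in>I. \<Sum>T\<in>Pow (B i). f T) = 0"
  shows "s \<le> t \<Longrightarrow> \<exists>c. \<forall>T. T \<subseteq> P \<and> card T = s \<longrightarrow> block_count T = c"
proof (induction s)
  case 0
  have "T = {}" if "T \<subseteq> P" "card T = 0" for T
    using that P by (meson card_0_eq finite_subset)
  then show ?case by (intro exI[of _ "block_count {}"]) metis
next
  case (Suc s)
  then obtain c where c: "\<And>R. R \<subseteq> P \<Longrightarrow> card R = s \<Longrightarrow> block_count R = c" by auto
  define \<mu> where "\<mu> = real ((m - s) * c) / real (card P - s)"
  define f where
    "f T = (if T \<subseteq> P \<and> card T = Suc s then complex_of_real (real (block_count T) - \<mu>) else 0)" for T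
  have harm: "harmonic_function P (Suc s) f"
    unfolding f_def \<mu>_def using block_count_deviation_harmonic c Suc.prems t by simp
  show ?case
    by (rule block_count_constant_if_orth[OF harm f_def]) (use orth[OF _ _ harm] Suc.prems in simp)
qed

end

lemma design_if_harmonic_sums_vanish:
  fixes P :: "nat set" and B :: "'i \<Rightarrow> nat set"
  assumes "finite P" "finite I" "\<And>i. i \<in> I \<Longrightarrow> B i \<subseteq> P \<and> card (B i) = m" "t \<le> card P"
    and "\<And>r f. 1 \<le> r \<Longrightarrow> r \<le> t \<Longrightarrow> harmonic_function P r f
                 \<Longrightarrow> (\<Sum>i\<in>I. \<Sum>T\<in>Pow (B i). f T) = 0"
  shows "is_t_design t P (image_mset B (mset_set I))"
  using block_count_constant[OF assms order.refl] assms(2)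
  by (simp add: is_t_design_def filter_mset_image_mset filter_mset_mset_set)

section \<open>Lifting harmonic functions to the Johnson scheme\<close>

lemma sum_Pow_by_card:
  assumes "finite P" "card P \<le> n"
  shows "(\<Sum>S\<in>Pow P. g S) = (\<Sum>k\<le>n. \<Sum>S\<in>{S. S \<subseteq> P \<and> card S = k}. g S)"
proof -
  have "card S \<le> n" if "S \<in> Pow P" for S
    using that assms card_mono[of P S] by simp
  then have "(\<Sum>S\<in>Pow P. g S) = (\<Sum>S\<in>Pow P. \<Sum>k\<le>n. if card S = k then g S else 0)"
    by (intro sum.cong) auto
  also have "\<dots> = (\<Sum>k\<le>n. \<Sum>S\<in>Pow P. if card S = k then g S else 0)" by (rule sum.swap)
  also have "\<dots> = (\<Sum>k\<le>n. \<Sum>S\<in>{S. S \<subseteq> P \<and> card S = k}. g S)"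
  proof (rule sum.cong[OF refl])
    fix k
    have "{S. S \<subseteq> P \<and> card S = k} = {S \<in> Pow P. card S = k}" by auto
    then show "(\<Sum>S\<in>Pow P. if card S = k then g S else 0) = (\<Sum>S\<in>{S. S \<subseteq> P \<and> card S = k}. g S)"
      using assms(1) by (simp only: sum.inter_filter finite_Pow_iff)
  qed
  finally show ?thesis .
qed

locale johnson_base_point = johnson_scheme +
  fixes x :: "nat set"
  assumes x_in_X: "x \<in> X"
begin

lemma x_subset: "x \<subseteq> {1..N}" and card_x: "card x = D" and finite_x: "finite x"
  using x_in_X mem_X_iff finite_vertex by auto

definition completions :: "nat \<Rightarrow> nat set set" where
  "completions k = {Z. Z \<subseteq> {1..N} - x \<and> card Z = D - k}"

lemma finite_completions: "finite (completions k)"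
  by (rule finite_subset[of _ "Pow {1..N}"]) (auto simp: completions_def)

lemma completion_disjoint: "Z \<in> completions k \<Longrightarrow> Z \<inter> x = {}"
  by (auto simp: completions_def)

lemma completion_union:
  assumes S: "S \<subseteq> x" and Z: "Z \<in> completions (card S)"
  shows "S \<union> Z \<in> X" "(S \<union> Z) \<inter> x = S"
proof -
  have "finite Z" "Z \<subseteq> {1..N}" "Z \<inter> S = {}" "card Z = D - card S"
    using Z S by (auto simp: completions_def intro: finite_subset)
  moreover have "finite S" "card S \<le> D" using S finite_x card_x card_mono finite_subset by metis+
  ultimately show "S \<union> Z \<in> X" using S x_subset
    by (auto simp: mem_X_iff card_Un_disjoint Int_commute)
  show "(S \<union> Z) \<inter> x = S" using S Z by (auto simp: completions_def)
qed

lemma diff_x_completion: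
  assumes y: "y \<in> X"
  shows "y - x \<in> completions (card (y \<inter> x))"
proof -
  have "card (y - x) = D - card (y \<inter> x)"
    using y finite_vertex by (simp add: mem_X_iff card_Diff_subset_Int)
  then show ?thesis using y by (auto simp: completions_def mem_X_iff)
qed

lemma sum_X_split:
  "(\<Sum>y\<in>X. f y) = (\<Sum>S\<in>Pow x. \<Sum>Z\<in>completions (card S). f (S \<union> Z))"
proof -
  have "(\<Sum>S\<in>Pow x. \<Sum>Z\<in>completions (card S). f (S \<union> Z))
      = (\<Sum>(S, Z)\<in>Sigma (Pow x) (\<lambda>S. completions (card S)). f (S \<union> Z))"
    by (subst sum.Sigma) (auto simp: finite_x finite_completions)
  also have "\<dots> = (\<Sum>y\<in>X. f y)"
    by (rule sum.reindex_bij_witness[where i="\<lambda>y. (y \<inter> x, y - x)" and j="\<lambda>(S, Z). S \<union> Z"])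
       (auto simp: completion_union diff_x_completion dest: completion_disjoint)
  finally show ?thesis by simp
qed

lemma card_inter_x_superset_vec:
  "(\<lambda>y. of_nat (card (y \<inter> x)) * superset_vec S y) = (\<lambda>y. \<Sum>p\<in>x. superset_vec (insert p S) y)"
proof
  fix y
  show "of_nat (card (y \<inter> x)) * superset_vec S y = (\<Sum>p\<in>x. superset_vec (insert p S) y)"
  proof (cases "y \<in> X \<and> S \<subseteq> y")
    case True
    have "(\<Sum>p\<in>x. superset_vec (insert p S) y) = (\<Sum>p\<in>x. if p \<in> y then 1 else 0)"
      using True by (intro sum.cong refl) (auto simp: superset_vec_def)
    also have "\<dots> = of_nat (card (y \<inter> x))"
      using finite_x by (simp add: sum_if_const Int_def conj_commute)
    finally show ?thesis using True by (simp add: superset_vec_def)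
  qed (auto simp: superset_vec_def intro!: sum.neutral)
qed

lemma span_below_mult_card_inter_x:
  assumes u: "u \<in> span_below i"
  shows "(\<lambda>y. (of_nat (card (y \<inter> x)) - \<alpha>) * u y) \<in> span_below (Suc i)"
proof -
  obtain f where u: "u = (\<lambda>y. \<Sum>S\<in>small_sets i. f S * superset_vec S y)"
    using assms by (auto simp: span_below_def)
  have "(\<lambda>y. (of_nat (card (y \<inter> x)) - \<alpha>) * superset_vec S y) \<in> span_below (Suc i)"
    if "S \<in> small_sets i" for S
  proof -
    have S: "S \<subseteq> {1..N}" "card S < i" "finite S"
      using that by (auto simp: small_sets_def intro: finite_subset)
    have "superset_vec (insert p S) \<in> span_below (Suc i)" if "p \<in> x" for p
      using that S x_subset by (intro superset_vec_in_span_below) (auto simp: card_insert_if)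
    then have "(\<lambda>y. \<Sum>p\<in>x. superset_vec (insert p S) y) \<in> span_below (Suc i)"
      by (rule span_below_sum)
    moreover have "(\<lambda>y. \<alpha> * superset_vec S y) \<in> span_below (Suc i)"
      using S by (intro span_below_scale superset_vec_in_span_below) auto
    ultimately have "(\<lambda>y. (\<Sum>p\<in>x. superset_vec (insert p S) y) - \<alpha> * superset_vec S y)
        \<in> span_below (Suc i)"
      by (rule span_below_diff)
    then show ?thesis
      using fun_cong[OF card_inter_x_superset_vec[of S]] by (simp add: algebra_simps)
  qed
  then have "(\<lambda>y. \<Sum>S\<in>small_sets i. f S * ((of_nat (card (y \<inter> x)) - \<alpha>) * superset_vec S y))
      \<in> span_below (Suc i)"
    by (intro span_below_sum span_below_scale)
  then show ?thesis unfolding u by (simp add: sum_distrib_left ac_simps)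
qed

lemma span_below_mult_prod:
  assumes "finite K" "u \<in> span_below i"
  shows "(\<lambda>y. (\<Prod>k\<in>K. (of_nat (card (y \<inter> x)) - of_nat k) / (of_nat m - of_nat k)) * u y)
           \<in> span_below (i + card K)"
  using assms(1)
proof (induction K rule: finite_induct)
  case empty
  then show ?case using assms(2) by simp
next
  case (insert k K)
  have "(\<lambda>y. (1 / (of_nat m - of_nat k)) * ((of_nat (card (y \<inter> x)) - of_nat k) *
      ((\<Prod>k\<in>K. (of_nat (card (y \<inter> x)) - of_nat k) / (of_nat m - of_nat k)) * u y)))
      \<in> span_below (Suc (i + card K))"
    by (intro span_below_scale span_below_mult_card_inter_x insert.IH)
  then show ?case using insert by (simp add: ac_simps)
qed

end

locale johnson_harmonic = johnson_base_point N D x + harmonic_function x r h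
  for N D :: nat and x :: "nat set" and r :: nat and h :: "nat set \<Rightarrow> complex"
begin

definition lift :: "(nat \<Rightarrow> complex) \<Rightarrow> nat set \<Rightarrow> complex" where
  "lift c = (\<lambda>y. if y \<in> X then c (card (y \<inter> x)) * hsum (y \<inter> x) else 0)"

text \<open>The three terms come from sorting the neighbours \<open>insert b (y - {a})\<close> of \<open>y\<close> by
  whether \<open>a\<close> and \<open>b\<close> lie in \<open>x\<close>.\<close>

definition A_coeff :: "(nat \<Rightarrow> complex) \<Rightarrow> nat \<Rightarrow> complex" where
  "A_coeff c m = c m * ((of_nat D - of_nat m + 1 - of_nat r) * (of_nat m - of_nat r) - of_nat m
                        + (of_nat D - of_nat m) * (of_nat N - 2 * of_nat D + of_nat m))
               + c (m - 1) * (of_nat N - 2 * of_nat D + of_nat m) * (of_nat m - of_nat r)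
               + c (Suc m) * (of_nat D - of_nat m) * (of_nat D - of_nat m - of_nat r)"

lemma lift_vanishes [simp]: "vanishes_off_X (lift c)"
  by (simp add: vanishes_off_X_def lift_def)

lemma sum_remove_inter_split:
  assumes "finite y"
  shows "(\<Sum>a\<in>y. G (y \<inter> x - {a})) = (\<Sum>a\<in>y \<inter> x. G (y \<inter> x - {a})) + of_nat (card (y - x)) * G (y \<inter> x)"
proof -
  have "(\<Sum>a\<in>y. G (y \<inter> x - {a})) = (\<Sum>a\<in>y \<inter> x. G (y \<inter> x - {a})) + (\<Sum>a\<in>y - x. G (y \<inter> x - {a}))"
    using assms by (metis sum.Int_Diff)
  moreover have "(\<Sum>a\<in>y - x. G (y \<inter> x - {a})) = (\<Sum>a\<in>y - x. G (y \<inter> x))"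
    by (intro sum.cong) auto
  ultimately show ?thesis by simp
qed

lemma lift_swap:
  assumes y: "y \<in> X" and a: "a \<in> y" and b: "b \<in> {1..N} - y"
  shows "lift c (insert b (y - {a}))
       = (if b \<in> x then c (card (insert b (y \<inter> x - {a}))) * hsum (insert b (y \<inter> x - {a}))
          else c (card (y \<inter> x - {a})) * hsum (y \<inter> x - {a}))"
proof -
  have "insert b (y - {a}) \<inter> x = (if b \<in> x then insert b (y \<inter> x - {a}) else y \<inter> x - {a})"
    using b by auto
  then show ?thesis unfolding lift_def using swap_mem_X[OF y a b] by simp
qed

lemma A_lift_at_split:
  assumes y: "y \<in> X"
  shows "A (lift c) y
       = (\<Sum>a\<in>y. \<Sum>b\<in>x - y. c (card (insert b (y \<inter> x - {a}))) * hsum (insert b (y \<inter> x - {a})))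
         + of_nat (card ({1..N} - y - x)) * (\<Sum>a\<in>y. c (card (y \<inter> x - {a})) * hsum (y \<inter> x - {a}))"
proof -
  have split: "(\<Sum>b\<in>{1..N} - y. g b) = (\<Sum>b\<in>x - y. g b) + (\<Sum>b\<in>{1..N} - y - x. g b)"
    for g :: "nat \<Rightarrow> complex"
  proof -
    have "({1..N} - y) - (x - y) = {1..N} - y - x" by auto
    then show ?thesis
      using sum.subset_diff[of "x - y" "{1..N} - y" g] x_subset by (auto simp: add.commute)
  qed
  have "(\<Sum>b\<in>{1..N} - y. lift c (insert b (y - {a})))
      = (\<Sum>b\<in>x - y. c (card (insert b (y \<inter> x - {a}))) * hsum (insert b (y \<inter> x - {a})))
        + of_nat (card ({1..N} - y - x)) * (c (card (y \<inter> x - {a})) * hsum (y \<inter> x - {a}))"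
    if a: "a \<in> y" for a
  proof -
    have "b \<in> {1..N} - y" if "b \<in> x - y" for b using that x_subset by auto
    then have "(\<Sum>b\<in>x - y. lift c (insert b (y - {a})))
        = (\<Sum>b\<in>x - y. c (card (insert b (y \<inter> x - {a}))) * hsum (insert b (y \<inter> x - {a})))"
      by (intro sum.cong refl) (simp add: lift_swap[OF y a])
    moreover have "(\<Sum>b\<in>{1..N} - y - x. lift c (insert b (y - {a})))
        = (\<Sum>b\<in>{1..N} - y - x. c (card (y \<inter> x - {a})) * hsum (y \<inter> x - {a}))"
      by (intro sum.cong refl) (simp add: lift_swap[OF y a])
    ultimately show ?thesis unfolding split by simp
  qed
  then show ?thesis by (simp add: A_eq_swap_sum[OF y] sum.distrib sum_distrib_left)
qed

lemma card_outside_x_y: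
  assumes y: "y \<in> X"
  shows "of_nat (card ({1..N} - y - x)) = (of_nat N - 2 * of_nat D + of_nat (card (y \<inter> x)) :: complex)"
proof -
  have fy: "finite y" using y finite_vertex by blast
  have "{1..N} - y - x = {1..N} - (y \<union> x)" "y \<union> x \<subseteq> {1..N}" using y x_subset by (auto simp: mem_X_iff)
  moreover have "card (y \<union> x) = D + D - card (y \<inter> x)"
    using card_Un_Int[OF fy finite_x] y card_x by (simp add: mem_X_iff)
  ultimately have "card ({1..N} - y - x) = N - (D + D - card (y \<inter> x))"
    by (simp add: card_Diff_subset fy finite_x)
  moreover have "card (y \<inter> x) \<le> D" using card_mono[OF finite_x, of "y \<inter> x"] card_x by auto
  ultimately show ?thesis using N_ge by (simp add: of_nat_diff)
qed

lemma sum_swap_into_x: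
  assumes y: "y \<in> X"
  defines "S \<equiv> y \<inter> x"
  shows "(\<Sum>a\<in>y. \<Sum>b\<in>x - y. c (card (insert b (S - {a}))) * hsum (insert b (S - {a})))
       = c (card S) * (((of_nat D - of_nat (card S) + 1 - of_nat r) * (of_nat (card S) - of_nat r)
                        - of_nat (card S)) * hsum S)
         + of_nat (D - card S) * (c (Suc (card S)) * ((of_nat D - of_nat (card S) - of_nat r) * hsum S))"
proof -
  have fy: "finite y" and S: "S \<subseteq> x" "finite S" and xy: "x - y = x - S"
    using y finite_vertex finite_x by (auto simp: S_def)
  have card_yx: "card (y - x) = D - card S"
    using fy y by (simp add: S_def card_Diff_subset_Int mem_X_iff)
  define G where "G T = (\<Sum>b\<in>x - S. c (card (insert b T)) * hsum (insert b T))" for T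
  have "card (insert b (S - {a})) = card S" if "a \<in> S" "b \<in> x - S" for a b
    using that S by (simp add: card_insert_if) (metis card_Diff1_less Suc_pred card_gt_0_iff empty_iff)
  then have "G (S - {a}) = c (card S) * (\<Sum>b\<in>x - S. hsum (insert b (S - {a})))" if "a \<in> S" for a
    using that by (simp add: G_def sum_distrib_left)
  moreover have "G S = c (Suc (card S)) * (\<Sum>b\<in>x - S. hsum (insert b S))"
    using S(2) by (simp add: G_def sum_distrib_left)
  ultimately have "(\<Sum>a\<in>y. G (S - {a}))
      = c (card S) * (\<Sum>a\<in>S. \<Sum>b\<in>x - S. hsum (insert b (S - {a})))
        + of_nat (D - card S) * (c (Suc (card S)) * (\<Sum>b\<in>x - S. hsum (insert b S)))"
    using sum_remove_inter_split[OF fy, of G] by (simp add: S_def[symmetric] card_yx sum_distrib_left)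
  then show ?thesis
    using hsum_swap_sum[OF S(1) refl] hsum_insert_sum[OF S(1)] card_x by (simp add: G_def xy)
qed

lemma sum_swap_off_x:
  assumes y: "y \<in> X"
  defines "S \<equiv> y \<inter> x"
  shows "(\<Sum>a\<in>y. c (card (S - {a})) * hsum (S - {a}))
       = c (card S - 1) * ((of_nat (card S) - of_nat r) * hsum S)
         + of_nat (D - card S) * (c (card S) * hsum S)"
proof -
  have fy: "finite y" and fS: "finite S" using y finite_vertex finite_x by (auto simp: S_def)
  have card_yx: "card (y - x) = D - card S"
    using fy y by (simp add: S_def card_Diff_subset_Int mem_X_iff)
  show ?thesis
    using sum_remove_inter_split[OF fy, of "\<lambda>T. c (card T) * hsum T"] hsum_remove_sum[OF fS]
    by (simp add: S_def[symmetric] card_yx sum_distrib_left[symmetric] cong: sum.cong)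
qed

lemma A_lift_at:
  assumes y: "y \<in> X"
  shows "A (lift c) y = A_coeff c (card (y \<inter> x)) * hsum (y \<inter> x)"
proof -
  have "card (y \<inter> x) \<le> D" using card_mono[OF finite_x, of "y \<inter> x"] card_x by auto
  then show ?thesis
    unfolding A_lift_at_split[OF y] sum_swap_into_x[OF y] sum_swap_off_x[OF y] card_outside_x_y[OF y]
    by (simp add: A_coeff_def of_nat_diff algebra_simps)
qed

lemma A_lift: "A (lift c) = lift (A_coeff c)"
proof
  fix y show "A (lift c) y = lift (A_coeff c) y"
    by (cases "y \<in> X") (simp_all add: A_lift_at A_outside lift_def[of "A_coeff c"])
qed

lemma A_shift_lift: "A_shift l (lift c) = lift (\<lambda>m. A_coeff c m - eig l * c m)"
  unfolding A_shift_def A_lift by (simp add: lift_def fun_eq_iff algebra_simps)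

fun shift_coeff_prod :: "nat list \<Rightarrow> (nat \<Rightarrow> complex) \<Rightarrow> nat \<Rightarrow> complex" where
  "shift_coeff_prod [] c = c"
| "shift_coeff_prod (l # L) c = (\<lambda>m. A_coeff (shift_coeff_prod L c) m - eig l * shift_coeff_prod L c m)"

lemma A_shift_prod_lift: "A_shift_prod L (lift c) = lift (shift_coeff_prod L c)"
  by (induction L) (simp_all add: A_shift_lift)

lemma lift_scale: "(\<lambda>y. k * lift c y) = lift (\<lambda>m. k * c m)"
  by (simp add: lift_def fun_eq_iff)

lemma E_lift:
  "E j (lift c) = lift (\<lambda>m. lagrange_coeff j [0..<Suc D] * shift_coeff_prod (E_factors j) c m)"
  by (simp add: E_eq_A_shift_prod A_shift_prod_lift lift_scale)

lemma hsum_inter_x: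
  assumes y: "y \<in> X"
  shows "hsum (y \<inter> x) = (\<Sum>T\<in>{T. T \<subseteq> x \<and> card T = r}. h T * superset_vec T y)"
proof -
  have "Pow (y \<inter> x) = {T \<in> Pow x. T \<subseteq> y}" by auto
  then have "hsum (y \<inter> x) = (\<Sum>T\<in>Pow x. if T \<subseteq> y then h T else 0)"
    unfolding hsum_def by (simp only: sum.inter_filter finite_Pow_iff finite_x)
  also have "\<dots> = (\<Sum>T\<in>{T. T \<subseteq> x \<and> card T = r}. if T \<subseteq> y then h T else 0)"
    by (rule sum.mono_neutral_right) (auto simp: finite_x dest: support)
  also have "\<dots> = (\<Sum>T\<in>{T. T \<subseteq> x \<and> card T = r}. h T * superset_vec T y)"
    using y by (intro sum.cong) (auto simp: superset_vec_def)
  finally show ?thesis .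
qed

lemma lift_one_in_span_below: "lift (\<lambda>_. 1) \<in> span_below (Suc r)"
proof -
  have "lift (\<lambda>_. 1) = (\<lambda>y. \<Sum>T\<in>{T. T \<subseteq> x \<and> card T = r}. h T * superset_vec T y)"
    by (auto simp: lift_def hsum_inter_x superset_vec_def fun_eq_iff)
  moreover have "\<dots> \<in> span_below (Suc r)"
    using x_subset by (intro span_below_sum span_below_scale superset_vec_in_span_below) auto
  ultimately show ?thesis by simp
qed

lemma hsum_outside_range: "S \<subseteq> x \<Longrightarrow> card S \<notin> {r..D - r} \<Longrightarrow> hsum S = 0"
  using hsum_below_degree hsum_vanishes_above card_x finite_subset_P by (metis atLeastAtMost_iff not_le)

lemma lift_unit_eq_prod:
  assumes m: "m \<in> {r..D - r}"
  shows "lift (\<lambda>k. if k = m then 1 else 0)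
       = (\<lambda>y. (\<Prod>k\<in>{r..D - r} - {m}. (of_nat (card (y \<inter> x)) - of_nat k) / (of_nat m - of_nat k))
              * lift (\<lambda>_. 1) y)"
proof
  fix y
  consider "y \<notin> X" | "y \<in> X" "card (y \<inter> x) \<notin> {r..D - r}" | "y \<in> X" "card (y \<inter> x) = m"
    | "y \<in> X" "card (y \<inter> x) \<in> {r..D - r} - {m}" by blast
  then show "lift (\<lambda>k. if k = m then 1 else 0) y
      = (\<Prod>k\<in>{r..D - r} - {m}. (of_nat (card (y \<inter> x)) - of_nat k) / (of_nat m - of_nat k))
        * lift (\<lambda>_. 1) y"
  proof cases
    case 2
    then show ?thesis using hsum_outside_range[of "y \<inter> x"] by (simp add: lift_def)
  next
    case 4
    then have "(\<Prod>k\<in>{r..D - r} - {m}. (of_nat (card (y \<inter> x)) - of_nat k) / (of_nat m - of_nat k))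
        = (0::complex)"
      by (subst prod_zero_iff) auto
    then show ?thesis using 4 by (simp add: lift_def)
  qed (simp_all add: lift_def)
qed

definition unit_coeff :: "nat \<Rightarrow> nat \<Rightarrow> complex" where
  "unit_coeff m = (\<lambda>k. if k = m then 1 else 0)"

lemma lift_expand: "lift c = (\<lambda>y. \<Sum>m\<le>D. c m * lift (unit_coeff m) y)"
proof
  fix y
  show "lift c y = (\<Sum>m\<le>D. c m * lift (unit_coeff m) y)"
  proof (cases "y \<in> X")
    case True
    have "(\<Sum>m\<le>D. c m * lift (unit_coeff m) y)
        = (\<Sum>m\<le>D. if m = card (y \<inter> x) then c m * hsum (y \<inter> x) else 0)"
      using True by (intro sum.cong) (auto simp: lift_def unit_coeff_def)
    moreover have "card (y \<inter> x) \<le> D" using card_mono[OF finite_x, of "y \<inter> x"] card_x by auto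
    ultimately show ?thesis using True by (simp add: lift_def)
  qed (simp add: lift_def)
qed

lemma lift_unit_outside_range: "m \<notin> {r..D - r} \<Longrightarrow> lift (unit_coeff m) = (\<lambda>y. 0)"
  using hsum_outside_range[of "_ \<inter> x"] by (auto simp: lift_def unit_coeff_def fun_eq_iff)

lemma lift_unit_in_span_below: "lift (unit_coeff m) \<in> span_below (Suc (D - r))"
proof (cases "m \<in> {r..D - r}")
  case True
  then have "card ({r..D - r} - {m}) = D - 2 * r" "Suc r + (D - 2 * r) = Suc (D - r)" by auto
  then show ?thesis
    using span_below_mult_prod[OF _ lift_one_in_span_below, of "{r..D - r} - {m}" m]
    by (simp add: unit_coeff_def lift_unit_eq_prod[OF True])
qed (simp add: lift_unit_outside_range span_below_zero)

lemma lift_in_span_below: "lift c \<in> span_below (Suc (D - r))"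
  by (subst lift_expand) (intro span_below_sum span_below_scale lift_unit_in_span_below)

lemma iprod_lift_superset_vec_eq:
  fixes S :: "nat set"
  defines "cnt k \<equiv> card {Z \<in> completions k. S - x \<subseteq> Z}"
  shows "iprod (lift c) (superset_vec S)
       = (\<Sum>T\<in>Pow x. if S \<inter> x \<subseteq> T then of_nat (cnt (card T)) * c (card T) * hsum T else 0)"
proof -
  have "iprod (lift c) (superset_vec S)
      = (\<Sum>T\<in>Pow x. \<Sum>Z\<in>completions (card T). lift c (T \<union> Z) * cnj (superset_vec S (T \<union> Z)))"
    unfolding iprod_def by (rule sum_X_split)
  also have "\<dots> = (\<Sum>T\<in>Pow x. \<Sum>Z\<in>completions (card T).
                     if S \<inter> x \<subseteq> T \<and> S - x \<subseteq> Z then c (card T) * hsum T else 0)"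
  proof (intro sum.cong refl)
    fix T Z assume "T \<in> Pow x" "Z \<in> completions (card T)"
    moreover from this have "S \<subseteq> T \<union> Z \<longleftrightarrow> S \<inter> x \<subseteq> T \<and> S - x \<subseteq> Z"
      using completion_disjoint[of Z "card T"] by blast
    ultimately show "lift c (T \<union> Z) * cnj (superset_vec S (T \<union> Z))
        = (if S \<inter> x \<subseteq> T \<and> S - x \<subseteq> Z then c (card T) * hsum T else 0)"
      by (simp add: completion_union lift_def superset_vec_def)
  qed
  also have "\<dots> = (\<Sum>T\<in>Pow x. if S \<inter> x \<subseteq> T then of_nat (cnt (card T)) * c (card T) * hsum T else 0)"
    using finite_completions by (intro sum.cong) (simp_all add: sum_if_const cnt_def)
  finally show ?thesis .
qed

lemma iprod_lift_superset_vec: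
  assumes S: "S \<subseteq> {1..N}" "card S < r"
  shows "iprod (lift c) (superset_vec S) = 0"
proof -
  define f where "f k = of_nat (card {Z \<in> completions k. S - x \<subseteq> Z}) * c k" for k
  have U: "S \<inter> x \<subseteq> x" "card (S \<inter> x) < r"
    using S card_mono[of S "S \<inter> x"] finite_subset by fastforce+
  have "iprod (lift c) (superset_vec S) = (\<Sum>T\<in>Pow x. if S \<inter> x \<subseteq> T then f (card T) * hsum T else 0)"
    unfolding f_def by (rule iprod_lift_superset_vec_eq)
  also have "\<dots> = (\<Sum>k\<le>D. \<Sum>T\<in>{T. T \<subseteq> x \<and> card T = k}.
                     if S \<inter> x \<subseteq> T then f (card T) * hsum T else 0)"
    by (rule sum_Pow_by_card) (simp_all add: finite_x card_x)
  also have "\<dots> = (\<Sum>k\<le>D. \<Sum>T\<in>{T. T \<subseteq> x \<and> card T = k}. if S \<inter> x \<subseteq> T then f k * hsum T else 0)"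
    by (intro sum.cong refl) auto
  also have "\<dots> = (\<Sum>k\<le>D. f k * level_sum (S \<inter> x) k)"
  proof (rule sum.cong[OF refl])
    fix k
    have "{T. S \<inter> x \<subseteq> T \<and> T \<subseteq> x \<and> card T = k} = {T \<in> {T. T \<subseteq> x \<and> card T = k}. S \<inter> x \<subseteq> T}"
      by auto
    then show "(\<Sum>T\<in>{T. T \<subseteq> x \<and> card T = k}. if S \<inter> x \<subseteq> T then f k * hsum T else 0)
        = f k * level_sum (S \<inter> x) k"
      using finite_level[of "{}" k] sum.inter_filter[of "{T. T \<subseteq> x \<and> card T = k}" "\<lambda>T. f k * hsum T"]
      by (simp add: level_sum_def sum_distrib_left)
  qed
  also have "\<dots> = 0" using level_sum_below_degree[OF U] by simp
  finally show ?thesis .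
qed

lemma lift_orth_span_below: "\<forall>u\<in>span_below r. iprod (lift c) u = 0"
proof
  fix u assume "u \<in> span_below r"
  then obtain g where u: "u = (\<lambda>y. \<Sum>S\<in>small_sets r. g S * superset_vec S y)"
    by (auto simp: span_below_def)
  show "iprod (lift c) u = 0"
    unfolding u iprod_sum_right iprod_scale_right
    by (rule sum.neutral) (auto simp: small_sets_def iprod_lift_superset_vec)
qed

lemma shift_coeff_prod_top:
  assumes c0: "\<forall>m>m0. c m = 0" and c1: "c m0 \<noteq> 0" and rm: "r \<le> m0"
  shows "(\<forall>m > m0 + length L. shift_coeff_prod L c m = 0) \<and> shift_coeff_prod L c (m0 + length L) \<noteq> 0"
proof (induction L)
  case Nil
  then show ?case using c0 c1 by simp
next
  case (Cons l L)
  define d where "d = shift_coeff_prod L c"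
  define m1 where "m1 = m0 + length L"
  have IH: "\<forall>m > m1. d m = 0" "d m1 \<noteq> 0" using Cons.IH by (simp_all add: d_def m1_def)
  have step: "shift_coeff_prod (l # L) c m = A_coeff d m - eig l * d m" for m by (simp add: d_def)
  have top: "shift_coeff_prod (l # L) c m = 0" if "Suc m1 < m" for m
  proof -
    have "d m = 0" "d (m - 1) = 0" "d (Suc m) = 0" using IH(1) that by auto
    then show ?thesis unfolding step A_coeff_def by simp
  qed
  have "shift_coeff_prod (l # L) c (Suc m1)
      = d m1 * of_nat (N - 2 * D + Suc m1) * of_nat (Suc m1 - r)"
  proof -
    have "d (Suc m1) = 0" "d (Suc (Suc m1)) = 0" using IH(1) by auto
    then show ?thesis unfolding step A_coeff_def using N_ge rm by (simp add: m1_def of_nat_diff)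
  qed
  moreover have "N - 2 * D + Suc m1 \<noteq> 0" "Suc m1 - r \<noteq> 0" using rm by (auto simp: m1_def)
  ultimately have "shift_coeff_prod (l # L) c (Suc m1) \<noteq> 0"
    using IH(2) by (simp only: mult_eq_0_iff of_nat_eq_0_iff) simp
  then show ?case using top by (simp add: m1_def)
qed

lemma iprod_lift_expand: "iprod w (lift c) = (\<Sum>m\<le>D. cnj (c m) * iprod w (lift (unit_coeff m)))"
  by (subst lift_expand) (simp add: iprod_sum_right iprod_scale_right)

lemma iprod_lift_unit:
  "iprod (lift c) (lift (unit_coeff m)) = c m * iprod (lift (unit_coeff m)) (lift (unit_coeff m))"
  unfolding iprod_def sum_distrib_left by (rule sum.cong[OF refl]) (simp add: lift_def unit_coeff_def)

lemma lift_nonzero: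
  assumes "c k \<noteq> 0" "r \<le> k" "k \<le> D - r" "h T \<noteq> 0"
  shows "lift c \<noteq> (\<lambda>y. 0)"
proof -
  obtain S where S: "S \<subseteq> x" "card S = k" "hsum S \<noteq> 0"
    using hsum_nonzero_level[OF assms(4)] assms(2,3) card_x by auto
  have "D - card S \<le> card ({1..N} - x)"
    using x_subset card_x N_ge by (simp add: card_Diff_subset finite_x)
  then obtain Z where "Z \<subseteq> {1..N} - x" "card Z = D - card S" by (rule obtain_subset_with_card_n)
  then have "Z \<in> completions (card S)" by (simp add: completions_def)
  then have "lift c (S \<union> Z) = c k * hsum S" using completion_union[OF S(1)] S by (simp add: lift_def)
  then show ?thesis using assms(1) S(3) by (metis mult_eq_0_iff)
qed

end

section \<open>Projecting the characteristic vector onto the lifts\<close>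

locale johnson_char_vec = johnson_harmonic +
  fixes Y :: "nat set set"
  assumes Y_subset: "Y \<subseteq> X"
begin

abbreviation "chi \<equiv> char_vec Y"

definition chi_coeff :: "nat \<Rightarrow> complex" where
  "chi_coeff m = iprod chi (lift (unit_coeff m))"

definition unit_norm :: "nat \<Rightarrow> complex" where
  "unit_norm m = iprod (lift (unit_coeff m)) (lift (unit_coeff m))"

definition proj_coeff :: "nat \<Rightarrow> complex" where
  "proj_coeff m = chi_coeff m / unit_norm m"

text \<open>The orthogonal projection of \<open>chi\<close> onto the lifts: the \<open>lift (unit_coeff m)\<close> are
  pairwise orthogonal, having disjoint supports.\<close>

definition proj :: "nat set \<Rightarrow> complex" where
  "proj = lift proj_coeff"

lemma chi_coeff_eq: "chi_coeff m = proj_coeff m * unit_norm m"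
proof (cases "unit_norm m = 0")
  case True
  then have "lift (unit_coeff m) = (\<lambda>y. 0)"
    by (intro iprod_self_eq_zero) (simp_all add: unit_norm_def)
  then show ?thesis using True by (simp add: chi_coeff_def)
qed (simp add: proj_coeff_def)

lemma iprod_proj_unit: "iprod proj (lift (unit_coeff m)) = chi_coeff m"
  unfolding proj_def by (subst iprod_lift_unit) (simp add: chi_coeff_eq unit_norm_def)

lemma iprod_chi_minus_proj_lift: "iprod (\<lambda>y. chi y - proj y) (lift c) = 0"
  by (subst iprod_lift_expand) (simp add: iprod_diff_left iprod_proj_unit chi_coeff_def)

lemma E_proj_zero_if_E_chi_zero:
  assumes "E j chi = (\<lambda>y. 0)"
  shows "E j proj = (\<lambda>y. 0)"
proof -
  let ?w = "E j proj"
  obtain c where wc: "E j ?w = lift c" unfolding proj_def E_lift by blast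
  have "iprod (\<lambda>y. (-1) * ?w y) ?w = iprod (E j (\<lambda>y. chi y - proj y)) ?w"
    using assms by (simp add: linear_op_diff[OF linear_E])
  also have "\<dots> = iprod (\<lambda>y. chi y - proj y) (E j ?w)" by (rule E_self_adjoint)
  also have "\<dots> = 0" unfolding wc by (rule iprod_chi_minus_proj_lift)
  finally have "(-1) * iprod ?w ?w = 0" by (simp only: iprod_scale_left)
  then have "iprod ?w ?w = 0" by simp
  then show ?thesis by (rule iprod_self_eq_zero[OF E_vanishes])
qed

lemma proj_coeff_nonzero:
  assumes "proj_coeff m \<noteq> 0"
  shows "r \<le> m" "m \<le> D - r" "\<exists>y\<in>Y. card (x \<inter> y) = m"
proof -
  have nz: "chi_coeff m \<noteq> 0" "unit_norm m \<noteq> 0" using assms by (auto simp: proj_coeff_def)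
  have "m \<in> {r..D - r}"
  proof (rule ccontr)
    assume "m \<notin> {r..D - r}"
    then show False using nz(2) lift_unit_outside_range[of m] by (simp add: unit_norm_def)
  qed
  then show "r \<le> m" "m \<le> D - r" by auto
  show "\<exists>y\<in>Y. card (x \<inter> y) = m"
  proof (rule ccontr)
    assume "\<not> (\<exists>y\<in>Y. card (x \<inter> y) = m)"
    then have "chi y * cnj (lift (unit_coeff m) y) = 0" for y
      by (auto simp: char_vec_def lift_def unit_coeff_def Int_commute)
    then have "chi_coeff m = 0" unfolding chi_coeff_def iprod_def by (intro sum.neutral) blast
    then show False using nz(1) by simp
  qed
qed

lemma E_proj_below_degree: "j < r \<Longrightarrow> j \<le> D \<Longrightarrow> E j proj = (\<lambda>y. 0)"
  using E_zero_if_orth_span_below[OF lift_orth_span_below] by (simp add: proj_def)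

lemma E_proj_above_range: "D - r < j \<Longrightarrow> E j proj = (\<lambda>y. 0)"
  by (rule E_kills_span_below[OF lift_in_span_below[of proj_coeff, folded proj_def]]) auto

lemma Estar_chi_nonzero_iff:
  "johnson_Estar N D x i chi \<noteq> (\<lambda>_. 0) \<longleftrightarrow> (\<exists>y\<in>Y. card (x \<inter> y) = D - i)"
  using Y_subset by (auto simp: johnson_Estar_def char_vec_def fun_eq_iff)

lemma finite_proj_support: "finite {m. proj_coeff m \<noteq> 0}"
  by (rule finite_subset[of _ "{..D}"]) (auto dest: proj_coeff_nonzero)

lemma proj_nonzero_coeff: "proj \<noteq> (\<lambda>y. 0) \<Longrightarrow> \<exists>m. proj_coeff m \<noteq> 0"
  by (auto simp: proj_def lift_def fun_eq_iff split: if_splits)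

lemma proj_zero_if_E_chi_trivial:
  assumes "\<And>j. 0 < j \<Longrightarrow> j \<le> D \<Longrightarrow> E j chi = (\<lambda>y. 0)"
  shows "proj = (\<lambda>y. 0)"
proof (rule eq_zero_if_all_E_zero)
  fix j assume "j \<le> D"
  then show "E j proj = (\<lambda>y. 0)"
    using assms E_proj_zero_if_E_chi_zero E_proj_below_degree degree_pos by (cases "j = 0") auto
qed (simp add: proj_def)

lemma delta_star_le:
  assumes "proj \<noteq> (\<lambda>y. 0)"
  shows "delta_star N D chi \<le> D"
proof -
  have "\<exists>j. j \<noteq> 0 \<and> j \<le> D \<and> E j chi \<noteq> (\<lambda>_. 0)"
    using proj_zero_if_E_chi_trivial assms by auto
  from LeastI_ex[OF this] show ?thesis by (simp add: delta_star_def)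
qed

lemma E_proj_below_delta_star:
  assumes nz: "proj \<noteq> (\<lambda>y. 0)" and j: "j < delta_star N D chi"
  shows "E j proj = (\<lambda>y. 0)"
proof -
  have "delta_star N D chi \<le> D" using delta_star_le[OF nz] .
  moreover have "\<not> (j \<noteq> 0 \<and> j \<le> D \<and> E j chi \<noteq> (\<lambda>_. 0))"
    using j unfolding delta_star_def by (rule not_less_Least)
  ultimately show ?thesis
    using j E_proj_zero_if_E_chi_zero E_proj_below_degree degree_pos by (cases "j = 0") auto
qed

lemma card_proj_support_le:
  "card {m. proj_coeff m \<noteq> 0}
     \<le> card {i. r \<le> i \<and> i \<le> D - r \<and> johnson_Estar N D x i chi \<noteq> (\<lambda>_. 0)}"
proof (rule card_inj_on_le[of "\<lambda>m. D - m"])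
  show "inj_on (\<lambda>m. D - m) {m. proj_coeff m \<noteq> 0}"
  proof (rule inj_onI)
    fix a b assume "a \<in> {m. proj_coeff m \<noteq> 0}" "b \<in> {m. proj_coeff m \<noteq> 0}" "D - a = D - b"
    moreover from this have "a \<le> D" "b \<le> D" using proj_coeff_nonzero(2) by fastforce+
    ultimately show "a = b" by simp
  qed
  show "(\<lambda>m. D - m) ` {m. proj_coeff m \<noteq> 0}
      \<subseteq> {i. r \<le> i \<and> i \<le> D - r \<and> johnson_Estar N D x i chi \<noteq> (\<lambda>_. 0)}"
  proof clarify
    fix m assume m: "proj_coeff m \<noteq> 0"
    then have "m \<le> D" "r \<le> D - m" "D - m \<le> D - r" using proj_coeff_nonzero[OF m] by auto
    then show "r \<le> D - m \<and> D - m \<le> D - r \<and> johnson_Estar N D x (D - m) chi \<noteq> (\<lambda>_. 0)"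
      using proj_coeff_nonzero(3)[OF m] by (simp add: Estar_chi_nonzero_iff)
  qed
qed simp

lemma lift_lagrange_in_span_below:
  assumes "finite K"
  shows "lift (\<lambda>m. \<Prod>k\<in>K. (of_nat m - of_nat k) / (of_nat m0 - of_nat k)) \<in> span_below (Suc r + card K)"
proof -
  have "lift (\<lambda>m. \<Prod>k\<in>K. (of_nat m - of_nat k) / (of_nat m0 - of_nat k))
      = (\<lambda>y. (\<Prod>k\<in>K. (of_nat (card (y \<inter> x)) - of_nat k) / (of_nat m0 - of_nat k)) * lift (\<lambda>_. 1) y)"
    by (simp add: lift_def fun_eq_iff)
  then show ?thesis using span_below_mult_prod[OF assms lift_one_in_span_below] by simp
qed

lemma iprod_proj_lagrange:
  assumes m0: "proj_coeff m0 \<noteq> 0"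
  defines "p \<equiv> \<lambda>m. \<Prod>k\<in>{m. proj_coeff m \<noteq> 0} - {m0}. (of_nat m - of_nat k) / (of_nat m0 - of_nat k)"
  shows "iprod proj (lift p) = chi_coeff m0"
proof -
  have "cnj (p m) * chi_coeff m = (if m = m0 then chi_coeff m0 else 0)" for m
  proof (cases "m = m0")
    case False
    then have "p m = 0 \<or> chi_coeff m = 0"
      using finite_proj_support chi_coeff_eq[of m] by (auto simp: p_def prod_zero_iff)
    then show ?thesis using False by auto
  qed (simp add: p_def)
  then have "iprod proj (lift p) = (\<Sum>m\<le>D. if m = m0 then chi_coeff m0 else 0)"
    by (subst iprod_lift_expand) (simp add: iprod_proj_unit)
  moreover have "m0 \<le> D" using proj_coeff_nonzero(2)[OF m0] by arith
  ultimately show ?thesis by simp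
qed

text \<open>The Lagrange polynomial through the support of \<open>proj_coeff\<close> has degree below
  \<open>\<delta>\<^sup>* - r\<close>, so its lift lies in \<open>span_below (delta_star N D chi)\<close>, which is orthogonal to \<open>proj\<close>.\<close>

lemma proj_zero_by_dual_width:
  assumes "int (card {i. r \<le> i \<and> i \<le> D - r \<and> johnson_Estar N D x i chi \<noteq> (\<lambda>_. 0)})
             \<le> int (delta_star N D chi) - int r"
  shows "proj = (\<lambda>y. 0)"
proof (rule ccontr)
  assume nz: "proj \<noteq> (\<lambda>y. 0)"
  obtain m0 where m0: "proj_coeff m0 \<noteq> 0" using proj_nonzero_coeff[OF nz] by blast
  define K where "K = {m. proj_coeff m \<noteq> 0} - {m0}"
  have "m0 \<in> {m. proj_coeff m \<noteq> 0}" using m0 by simp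
  then have "card {m. proj_coeff m \<noteq> 0} > 0" using finite_proj_support card_gt_0_iff by blast
  then have "card K + 1 = card {m. proj_coeff m \<noteq> 0}"
    using finite_proj_support m0 by (simp add: K_def card_Diff_singleton)
  then have "Suc r + card K \<le> delta_star N D chi" using card_proj_support_le assms by simp
  then have "lift (\<lambda>m. \<Prod>k\<in>K. (of_nat m - of_nat k) / (of_nat m0 - of_nat k))
      \<in> span_below (delta_star N D chi)"
    using lift_lagrange_in_span_below[of K m0] finite_proj_support
    by (auto simp: K_def intro: span_below_mono)
  moreover have "\<forall>u\<in>span_below (delta_star N D chi). iprod proj u = 0"
    using E_proj_below_delta_star[OF nz] delta_star_le[OF nz] by (intro orth_span_below_if_E_zero) auto
  ultimately have "chi_coeff m0 = 0" using iprod_proj_lagrange[OF m0] by (simp add: K_def)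
  then show False using m0 by (simp add: proj_coeff_def)
qed

lemma proj_support_le_D_minus_delta_x:
  assumes m: "proj_coeff m \<noteq> 0"
  shows "m \<le> D - delta_x N D x chi"
proof (rule ccontr)
  assume "\<not> m \<le> D - delta_x N D x chi"
  moreover have "r \<le> m" "m \<le> D - r" using proj_coeff_nonzero[OF m] by auto
  ultimately have "D - m < delta_x N D x chi" "D - m \<noteq> 0" "D - m \<le> D" using degree_pos by auto
  then have "johnson_Estar N D x (D - m) chi = (\<lambda>_. 0)"
    unfolding delta_x_def using not_less_Least by blast
  moreover obtain y where "y \<in> Y" "card (x \<inter> y) = m" using proj_coeff_nonzero(3)[OF m] by blast
  moreover have "D - (D - m) = m" using \<open>m \<le> D - r\<close> by simp
  ultimately show False using Estar_chi_nonzero_iff[of "D - m"] by auto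
qed

lemma card_proj_spectrum_le:
  "card {j. j \<le> D \<and> E j proj \<noteq> (\<lambda>_. 0)} \<le> card {j. r \<le> j \<and> j \<le> D - r \<and> E j chi \<noteq> (\<lambda>_. 0)}"
proof (rule card_mono)
  show "finite {j. r \<le> j \<and> j \<le> D - r \<and> E j chi \<noteq> (\<lambda>_. 0)}" by simp
  show "{j. j \<le> D \<and> E j proj \<noteq> (\<lambda>_. 0)} \<subseteq> {j. r \<le> j \<and> j \<le> D - r \<and> E j chi \<noteq> (\<lambda>_. 0)}"
  proof clarify
    fix j assume j: "j \<le> D" "E j proj \<noteq> (\<lambda>_. 0)"
    then show "r \<le> j \<and> j \<le> D - r \<and> E j chi \<noteq> (\<lambda>_. 0)"
      using E_proj_below_degree[of j] E_proj_above_range[of j] E_proj_zero_if_E_chi_zero[of j]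
      by (auto simp: not_less)
  qed
qed

lemma exists_h_nonzero:
  assumes "proj_coeff m \<noteq> 0"
  shows "\<exists>T. h T \<noteq> 0"
proof (rule ccontr)
  assume "\<nexists>T. h T \<noteq> 0"
  then have "lift (unit_coeff m) = (\<lambda>y. 0)" by (simp add: lift_def hsum_def fun_eq_iff)
  then have "chi_coeff m = 0" by (simp add: chi_coeff_def)
  then show False using assms by (simp add: proj_coeff_def)
qed

text \<open>\<open>A_shift_prod\<close> over the spectrum of \<open>proj\<close> kills \<open>proj\<close>, but it moves the top nonzero
  coefficient up by one level per factor, ending at a level \<open>\<le> D - r\<close> where the lift is nonzero.\<close>

lemma proj_zero_by_width:
  assumes "int (card {j. r \<le> j \<and> j \<le> D - r \<and> E j chi \<noteq> (\<lambda>_. 0)})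
             \<le> int (delta_x N D x chi) - int r"
  shows "proj = (\<lambda>y. 0)"
proof (rule ccontr)
  assume nz: "proj \<noteq> (\<lambda>y. 0)"
  define m0 where "m0 = Max {m. proj_coeff m \<noteq> 0}"
  define L where "L = sorted_list_of_set {j. j \<le> D \<and> E j proj \<noteq> (\<lambda>_. 0)}"
  have "{m. proj_coeff m \<noteq> 0} \<noteq> {}" using proj_nonzero_coeff[OF nz] by auto
  then have m0: "proj_coeff m0 \<noteq> 0" "\<forall>m>m0. proj_coeff m = 0"
    using Max_in[OF finite_proj_support] Max_ge[OF finite_proj_support] unfolding m0_def
    by (auto simp: not_le[symmetric])
  have "length L \<le> delta_x N D x chi - r"
    using card_proj_spectrum_le assms by (simp add: L_def)
  then have top: "m0 + length L \<le> D - r"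
    using proj_support_le_D_minus_delta_x[OF m0(1)] proj_coeff_nonzero(1,2)[OF m0(1)] degree_pos
    by arith
  obtain T where "h T \<noteq> 0" using exists_h_nonzero[OF m0(1)] by blast
  then have "lift (shift_coeff_prod L proj_coeff) \<noteq> (\<lambda>y. 0)"
    using shift_coeff_prod_top[OF m0(2,1)] proj_coeff_nonzero[OF m0(1)] top by (intro lift_nonzero) auto
  moreover have "A_shift_prod L proj = (\<lambda>y. 0)"
    by (rule A_shift_prod_kills_spectrum) (simp add: L_def)
  ultimately show False by (simp add: proj_def A_shift_prod_lift)
qed

lemma chi_coeff_eq_block_sum:
  "chi_coeff m = cnj (\<Sum>y\<in>{y \<in> Y. card (x \<inter> y) = m}. hsum (x \<inter> y))"
proof -
  have "chi_coeff m = (\<Sum>y\<in>X. if y \<in> Y \<and> card (x \<inter> y) = m then cnj (hsum (x \<inter> y)) else 0)"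
    unfolding chi_coeff_def iprod_def
    by (rule sum.cong) (auto simp: char_vec_def lift_def unit_coeff_def Int_commute)
  also have "\<dots> = (\<Sum>y\<in>{y \<in> Y. card (x \<inter> y) = m}. cnj (hsum (x \<inter> y)))"
  proof -
    have "{y \<in> X. y \<in> Y \<and> card (x \<inter> y) = m} = {y \<in> Y. card (x \<inter> y) = m}"
      using Y_subset by auto
    then show ?thesis by (simp only: sum.inter_filter[OF finite_X, symmetric])
  qed
  finally show ?thesis by (simp add: cnj_sum)
qed

lemma block_hsum_zero:
  assumes "int (card {j. r \<le> j \<and> j \<le> D - r \<and> E j chi \<noteq> (\<lambda>_. 0)})
             \<le> int (delta_x N D x chi) - int r
         \<or> int (card {i. r \<le> i \<and> i \<le> D - r \<and> johnson_Estar N D x i chi \<noteq> (\<lambda>_. 0)})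
             \<le> int (delta_star N D chi) - int r"
  shows "(\<Sum>y\<in>{y \<in> Y. card (x \<inter> y) = m}. hsum (x \<inter> y)) = 0"
proof -
  have "proj = (\<lambda>y. 0)" using assms proj_zero_by_width proj_zero_by_dual_width by blast
  then have "chi_coeff m = 0" using iprod_proj_unit[of m] by simp
  then have "cnj (\<Sum>y\<in>{y \<in> Y. card (x \<inter> y) = m}. hsum (x \<inter> y)) = 0"
    by (simp only: chi_coeff_eq_block_sum)
  then show ?thesis by (simp only: complex_cnj_zero_iff)
qed

end

theorem mainTheorem14:
  fixes N D t :: nat and x :: "nat set" and Y :: "nat set set"
  assumes "1 \<le> D" and "D \<le> N div 2"
    and "x \<in> johnson_X N D"
    and "Y \<subseteq> johnson_X N D" and "1 < card Y" and "card Y < card (johnson_X N D)"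
    and "1 \<le> t" and "t \<le> D"
    and "\<forall>r. 1 \<le> r \<and> r \<le> t \<longrightarrow>
           int (card {j. r \<le> j \<and> j \<le> D - r \<and> johnson_E N D j (char_vec Y) \<noteq> (\<lambda>_. 0)})
              \<le> int (delta_x N D x (char_vec Y)) - int r
         \<or> int (card {i. r \<le> i \<and> i \<le> D - r \<and> johnson_Estar N D x i (char_vec Y) \<noteq> (\<lambda>_. 0)})
              \<le> int (delta_star N D (char_vec Y)) - int r"
  shows "\<forall>k\<le>D. is_t_design t x
           (image_mset (\<lambda>y. x \<inter> y) (mset_set {y\<in>Y. card (x \<inter> y) = D - k}))"
proof (intro allI impI)
  fix k assume "k \<le> D"
  interpret johnson_base_point N D x using assms(1-3) by unfold_locales auto
  have "finite {y \<in> Y. card (x \<inter> y) = D - k}"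
    by (rule finite_subset[OF _ finite_X]) (use assms(4) in auto)
  then show "is_t_design t x (image_mset (\<lambda>y. x \<inter> y) (mset_set {y \<in> Y. card (x \<inter> y) = D - k}))"
  proof (rule design_if_harmonic_sums_vanish[OF finite_x])
    fix r f assume r: "1 \<le> r" "r \<le> t" and harm: "harmonic_function x r f"
    interpret harmonic_function x r f by (rule harm)
    interpret johnson_char_vec N D x r f Y by unfold_locales (rule assms(4))
    show "(\<Sum>y\<in>{y \<in> Y. card (x \<inter> y) = D - k}. \<Sum>T\<in>Pow (x \<inter> y). f T) = 0"
      using block_hsum_zero assms(9) r by (simp add: hsum_def Int_commute)
  qed (use assms(8) card_x in auto)
qed

end
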